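(* Let $\mathcal K$ be a finitely complete 2-category and $f:A\to B$ a 1-cell. (1) (Yoneda lemma) For any span $(d_1,E_1,c_1)$ from $X$ to $A$ and any discrete fibration $(d_2,E_2,c_2)$ from $X$ to $B$, a map of spans $f/B\circ E_1\to E_2$ is determined uniquely by its composite with the map of spans $i_f\circ\mathrm{id}:f\circ E_1\to f/B\circ E_1$. (2) (Coyoneda lemma) For any span $(d_1,E_1,c_1)$ from $A$ to $X$ and any discrete fibration $(d_2,E_2,c_2)$ from $B$ to $X$, a map of spans $E_1\circ B/f\to E_2$ is determined uniquely by its composite with the map of spans $\mathrm{id}\circ j_f:E_1\circ f^{rev}\to E_1\circ B/f$.
   Context: Lax pullbacks: $f/B$ denotes the lax pullback of $f$ and $1_B$, with projections $p:f/B\to A$, $q:f/B\to B$ and universal 2-cell $\lambda:fp\Rightarrow q$; $B/f$ denotes the lax pullback of $1_B$ and $f$, with projections $p':B/f\to B$, $q':B/f\to A$ and universal 2-cell $\lambda':p'\Rightarrow fq'$. $i_f:A\to f/B$ is the unique 1-cell with $pi_f=1_A$, $qi_f=f$, $\lambda i_f=\mathrm{id}$; $j_f:A\to B/f$ is the unique 1-cell with $p'j_f=f$, $q'j_f=1_A$, $\lambda'j_f=\mathrm{id}$. Spans: a span from $A$ to $B$ is $(d,E,c)$ with $d:E\to A$, $c:E\to B$; a map of spans is a 1-cell between heads commuting with both legs. Composition is by pullback: for $(d_1,E_1,c_1)$ from $A$ to $B$ and $(d_2,E_2,c_2)$ from $B$ to $C$, $E_2\circ E_1=(d_1\pi_1,E_1\times_BE_2,c_2\pi_2)$;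 this is functorial in maps of spans (the horizontal composite $\alpha\circ\beta$ of span maps is the induced map of pullbacks). The span $f$ is $(1_A,A,f)$ from $A$ to $B$, $f^{rev}$ is $(f,A,1_A)$ from $B$ to $A$, $f/B$ is the span $(p,f/B,q)$ from $A$ to $B$, and $B/f$ is the span $(p',B/f,q')$ from $B$ to $A$; $i_f$ is a map of spans $f\to f/B$ and $j_f$ a map of spans $f^{rev}\to B/f$. A span $(d,E,c)$ from $A$ to $B$ is a discrete fibration from $A$ to $B$ if for every object $Y$ the span of categories $\mathcal K(Y,A)\leftarrow\mathcal K(Y,E)\to\mathcal K(Y,B)$ is a discrete fibration, meaning: (i) for each object $e$ and arrow $u:a\to d(e)$ there is a unique $\bar u$ with codomain $e$, $d(\bar u)=u$ and $c(\bar u)$ an identity; (ii) for each $v:c(e)\to b$ there is a unique $\bar v$ with domain $e$, $d(\bar v)$ an identity and $c(\bar v)=v$; (iii) every arrow $h$ equals the (defined) composite $\overline{d(h)}\circ\overline{c(h)}$. *)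

theory Defs
  imports Main
begin

text \<open>A (strict) 2-category given by carrier sets of objects, 1-cells and 2-cells.
  comp1 g f is g after f; vcomp b a is b after a (vertical);
  hcomp b a is the horizontal composite of a (first) with b (second).\<close>

record ('o, 'm, 'c) two_cat =
  obj   :: "'o set"
  arr   :: "'m set"
  cell  :: "'c set"
  s1    :: "'m \<Rightarrow> 'o"
  t1    :: "'m \<Rightarrow> 'o"
  comp1 :: "'m \<Rightarrow> 'm \<Rightarrow> 'm"
  ide1  :: "'o \<Rightarrow> 'm"
  cdom  :: "'c \<Rightarrow> 'm"
  ccod  :: "'c \<Rightarrow> 'm"
  vcomp :: "'c \<Rightarrow> 'c \<Rightarrow> 'c"
  hcomp :: "'c \<Rightarrow> 'c \<Rightarrow> 'c"
  ide2  :: "'m \<Rightarrow> 'c"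

definition hom :: "('o,'m,'c) two_cat \<Rightarrow> 'o \<Rightarrow> 'o \<Rightarrow> 'm set" where
  "hom K a b = {f \<in> arr K. s1 K f = a \<and> t1 K f = b}"

definition cell2 :: "('o,'m,'c) two_cat \<Rightarrow> 'm \<Rightarrow> 'm \<Rightarrow> 'c set" where
  "cell2 K f g = {\<alpha> \<in> cell K. cdom K \<alpha> = f \<and> ccod K \<alpha> = g}"

definition wl :: "('o,'m,'c) two_cat \<Rightarrow> 'm \<Rightarrow> 'c \<Rightarrow> 'c" where
  "wl K g \<alpha> = hcomp K (ide2 K g) \<alpha>"

definition wr :: "('o,'m,'c) two_cat \<Rightarrow> 'c \<Rightarrow> 'm \<Rightarrow> 'c" where
  "wr K \<alpha> f = hcomp K \<alpha> (ide2 K f)"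

definition two_category :: "('o,'m,'c) two_cat \<Rightarrow> bool" where
  "two_category K \<longleftrightarrow>
    (\<forall>f\<in>arr K. s1 K f \<in> obj K \<and> t1 K f \<in> obj K) \<and>
    (\<forall>a\<in>obj K. ide1 K a \<in> hom K a a) \<and>
    (\<forall>f\<in>arr K. \<forall>g\<in>arr K. t1 K f = s1 K g \<longrightarrow> comp1 K g f \<in> hom K (s1 K f) (t1 K g)) \<and>
    (\<forall>f\<in>arr K. \<forall>g\<in>arr K. \<forall>h\<in>arr K. t1 K f = s1 K g \<and> t1 K g = s1 K h \<longrightarrow>
        comp1 K h (comp1 K g f) = comp1 K (comp1 K h g) f) \<and>
    (\<forall>f\<in>arr K. comp1 K (ide1 K (t1 K f)) f = f \<and> comp1 K f (ide1 K (s1 K f)) = f) \<and>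
    (\<forall>\<alpha>\<in>cell K. cdom K \<alpha> \<in> arr K \<and> ccod K \<alpha> \<in> arr K \<and>
        s1 K (cdom K \<alpha>) = s1 K (ccod K \<alpha>) \<and> t1 K (cdom K \<alpha>) = t1 K (ccod K \<alpha>)) \<and>
    (\<forall>f\<in>arr K. ide2 K f \<in> cell2 K f f) \<and>
    (\<forall>\<alpha>\<in>cell K. \<forall>\<beta>\<in>cell K. ccod K \<alpha> = cdom K \<beta> \<longrightarrow>
        vcomp K \<beta> \<alpha> \<in> cell2 K (cdom K \<alpha>) (ccod K \<beta>)) \<and>
    (\<forall>\<alpha>\<in>cell K. \<forall>\<beta>\<in>cell K. \<forall>\<gamma>\<in>cell K. ccod K \<alpha> = cdom K \<beta> \<and> ccod K \<beta> = cdom K \<gamma> \<longrightarrow>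
        vcomp K \<gamma> (vcomp K \<beta> \<alpha>) = vcomp K (vcomp K \<gamma> \<beta>) \<alpha>) \<and>
    (\<forall>\<alpha>\<in>cell K. vcomp K (ide2 K (ccod K \<alpha>)) \<alpha> = \<alpha> \<and> vcomp K \<alpha> (ide2 K (cdom K \<alpha>)) = \<alpha>) \<and>
    (\<forall>\<alpha>\<in>cell K. \<forall>\<beta>\<in>cell K. t1 K (cdom K \<alpha>) = s1 K (cdom K \<beta>) \<longrightarrow>
        hcomp K \<beta> \<alpha> \<in> cell2 K (comp1 K (cdom K \<beta>) (cdom K \<alpha>)) (comp1 K (ccod K \<beta>) (ccod K \<alpha>))) \<and>
    (\<forall>\<alpha>\<in>cell K. \<forall>\<beta>\<in>cell K. \<forall>\<gamma>\<in>cell K.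
        t1 K (cdom K \<alpha>) = s1 K (cdom K \<beta>) \<and> t1 K (cdom K \<beta>) = s1 K (cdom K \<gamma>) \<longrightarrow>
        hcomp K \<gamma> (hcomp K \<beta> \<alpha>) = hcomp K (hcomp K \<gamma> \<beta>) \<alpha>) \<and>
    (\<forall>\<alpha>\<in>cell K. hcomp K (ide2 K (ide1 K (t1 K (cdom K \<alpha>)))) \<alpha> = \<alpha> \<and>
        hcomp K \<alpha> (ide2 K (ide1 K (s1 K (cdom K \<alpha>)))) = \<alpha>) \<and>
    (\<forall>f\<in>arr K. \<forall>g\<in>arr K. t1 K f = s1 K g \<longrightarrow>
        hcomp K (ide2 K g) (ide2 K f) = ide2 K (comp1 K g f)) \<and>
    (\<forall>\<alpha>\<in>cell K. \<forall>\<alpha>'\<in>cell K. \<forall>\<beta>\<in>cell K. \<forall>\<beta>'\<in>cell K.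
        ccod K \<alpha> = cdom K \<alpha>' \<and> ccod K \<beta> = cdom K \<beta>' \<and> t1 K (cdom K \<alpha>) = s1 K (cdom K \<beta>) \<longrightarrow>
        hcomp K (vcomp K \<beta>' \<beta>) (vcomp K \<alpha>' \<alpha>) = vcomp K (hcomp K \<beta>' \<alpha>') (hcomp K \<beta> \<alpha>))"

definition is_terminal :: "('o,'m,'c) two_cat \<Rightarrow> 'o \<Rightarrow> bool" where
  "is_terminal K T \<longleftrightarrow> T \<in> obj K \<and>
    (\<forall>Y\<in>obj K. (\<exists>!t. t \<in> hom K Y T) \<and>
       (\<forall>t\<in>hom K Y T. \<forall>t'\<in>hom K Y T. \<exists>!\<gamma>. \<gamma> \<in> cell2 K t t'))"

definition is_pullback :: "('o,'m,'c) two_cat \<Rightarrow> 'm \<Rightarrow> 'm \<Rightarrow> 'o \<Rightarrow> 'm \<Rightarrow> 'm \<Rightarrow> bool" where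
  "is_pullback K f g P p1 p2 \<longleftrightarrow>
    P \<in> obj K \<and> p1 \<in> hom K P (s1 K f) \<and> p2 \<in> hom K P (s1 K g) \<and>
    comp1 K f p1 = comp1 K g p2 \<and>
    (\<forall>Y\<in>obj K. \<forall>x\<in>hom K Y (s1 K f). \<forall>y\<in>hom K Y (s1 K g). comp1 K f x = comp1 K g y \<longrightarrow>
        (\<exists>!z. z \<in> hom K Y P \<and> comp1 K p1 z = x \<and> comp1 K p2 z = y)) \<and>
    (\<forall>Y\<in>obj K. \<forall>z\<in>hom K Y P. \<forall>z'\<in>hom K Y P. \<forall>\<alpha>\<in>cell2 K (comp1 K p1 z) (comp1 K p1 z').
        \<forall>\<beta>\<in>cell2 K (comp1 K p2 z) (comp1 K p2 z'). wl K f \<alpha> = wl K g \<beta> \<longrightarrow>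
        (\<exists>!\<gamma>. \<gamma> \<in> cell2 K z z' \<and> wl K p1 \<gamma> = \<alpha> \<and> wl K p2 \<gamma> = \<beta>))"

definition is_comma :: "('o,'m,'c) two_cat \<Rightarrow> 'm \<Rightarrow> 'm \<Rightarrow> 'o \<Rightarrow> 'm \<Rightarrow> 'm \<Rightarrow> 'c \<Rightarrow> bool" where
  "is_comma K f g P p q l \<longleftrightarrow>
    P \<in> obj K \<and> p \<in> hom K P (s1 K f) \<and> q \<in> hom K P (s1 K g) \<and>
    l \<in> cell2 K (comp1 K f p) (comp1 K g q) \<and>
    (\<forall>Y\<in>obj K. \<forall>x\<in>hom K Y (s1 K f). \<forall>y\<in>hom K Y (s1 K g).
       \<forall>\<theta>\<in>cell2 K (comp1 K f x) (comp1 K g y).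
        (\<exists>!z. z \<in> hom K Y P \<and> comp1 K p z = x \<and> comp1 K q z = y \<and> wr K l z = \<theta>)) \<and>
    (\<forall>Y\<in>obj K. \<forall>z\<in>hom K Y P. \<forall>z'\<in>hom K Y P. \<forall>\<alpha>\<in>cell2 K (comp1 K p z) (comp1 K p z').
        \<forall>\<beta>\<in>cell2 K (comp1 K q z) (comp1 K q z').
        vcomp K (wl K g \<beta>) (wr K l z) = vcomp K (wr K l z') (wl K f \<alpha>) \<longrightarrow>
        (\<exists>!\<gamma>. \<gamma> \<in> cell2 K z z' \<and> wl K p \<gamma> = \<alpha> \<and> wl K q \<gamma> = \<beta>))"

definition finitely_complete :: "('o,'m,'c) two_cat \<Rightarrow> bool" where
  "finitely_complete K \<longleftrightarrow> two_category K \<and> (\<exists>T. is_terminal K T) \<and>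
    (\<forall>f\<in>arr K. \<forall>g\<in>arr K. t1 K f = t1 K g \<longrightarrow> (\<exists>P p1 p2. is_pullback K f g P p1 p2)) \<and>
    (\<forall>f\<in>arr K. \<forall>g\<in>arr K. t1 K f = t1 K g \<longrightarrow> (\<exists>P p q l. is_comma K f g P p q l))"

definition pb :: "('o,'m,'c) two_cat \<Rightarrow> 'm \<Rightarrow> 'm \<Rightarrow> 'o \<times> 'm \<times> 'm" where
  "pb K f g = (SOME (P, p1, p2). is_pullback K f g P p1 p2)"

definition cm :: "('o,'m,'c) two_cat \<Rightarrow> 'm \<Rightarrow> 'm \<Rightarrow> 'o \<times> 'm \<times> 'm \<times> 'c" where
  "cm K f g = (SOME (P, p, q, l). is_comma K f g P p q l)"

type_synonym ('o, 'm) span = "'m \<times> 'o \<times> 'm"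

definition sd :: "('o,'m) span \<Rightarrow> 'm" where "sd S = fst S"
definition sE :: "('o,'m) span \<Rightarrow> 'o" where "sE S = fst (snd S)"
definition sc :: "('o,'m) span \<Rightarrow> 'm" where "sc S = snd (snd S)"

definition is_span :: "('o,'m,'c) two_cat \<Rightarrow> 'o \<Rightarrow> 'o \<Rightarrow> ('o,'m) span \<Rightarrow> bool" where
  "is_span K A B S \<longleftrightarrow> sE S \<in> obj K \<and> sd S \<in> hom K (sE S) A \<and> sc S \<in> hom K (sE S) B"

definition span_map :: "('o,'m,'c) two_cat \<Rightarrow> ('o,'m) span \<Rightarrow> ('o,'m) span \<Rightarrow> 'm \<Rightarrow> bool" where
  "span_map K S S' m \<longleftrightarrow> m \<in> hom K (sE S) (sE S') \<and>
     comp1 K (sd S') m = sd S \<and> comp1 K (sc S') m = sc S"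

text \<open>span_comp K S1 S2 is the composite S2 o S1 (S1 first), formed by the chosen pullback.\<close>
definition span_comp :: "('o,'m,'c) two_cat \<Rightarrow> ('o,'m) span \<Rightarrow> ('o,'m) span \<Rightarrow> ('o,'m) span" where
  "span_comp K S1 S2 = (case pb K (sc S1) (sd S2) of (P, p1, p2) \<Rightarrow>
      (comp1 K (sd S1) p1, P, comp1 K (sc S2) p2))"

definition span_hmap :: "('o,'m,'c) two_cat \<Rightarrow> ('o,'m) span \<Rightarrow> ('o,'m) span \<Rightarrow>
    ('o,'m) span \<Rightarrow> ('o,'m) span \<Rightarrow> 'm \<Rightarrow> 'm \<Rightarrow> 'm" where
  "span_hmap K S1 S2 T1 T2 m1 m2 = (case pb K (sc S1) (sd S2) of (P, p1, p2) \<Rightarrow>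
     (case pb K (sc T1) (sd T2) of (Q, q1, q2) \<Rightarrow>
       (THE z. z \<in> hom K P Q \<and> comp1 K q1 z = comp1 K m1 p1 \<and> comp1 K q2 z = comp1 K m2 p2)))"

definition span_of :: "('o,'m,'c) two_cat \<Rightarrow> 'm \<Rightarrow> ('o,'m) span" where
  "span_of K f = (ide1 K (s1 K f), s1 K f, f)"

definition span_rev :: "('o,'m,'c) two_cat \<Rightarrow> 'm \<Rightarrow> ('o,'m) span" where
  "span_rev K f = (f, s1 K f, ide1 K (s1 K f))"

definition fslash :: "('o,'m,'c) two_cat \<Rightarrow> 'm \<Rightarrow> ('o,'m) span" where
  "fslash K f = (case cm K f (ide1 K (t1 K f)) of (P, p, q, l) \<Rightarrow> (p, P, q))"

definition slashf :: "('o,'m,'c) two_cat \<Rightarrow> 'm \<Rightarrow> ('o,'m) span" where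
  "slashf K f = (case cm K (ide1 K (t1 K f)) f of (P, p, q, l) \<Rightarrow> (p, P, q))"

definition i_f :: "('o,'m,'c) two_cat \<Rightarrow> 'm \<Rightarrow> 'm" where
  "i_f K f = (case cm K f (ide1 K (t1 K f)) of (P, p, q, l) \<Rightarrow>
     (THE z. z \<in> hom K (s1 K f) P \<and> comp1 K p z = ide1 K (s1 K f) \<and> comp1 K q z = f \<and>
             wr K l z = ide2 K f))"

definition j_f :: "('o,'m,'c) two_cat \<Rightarrow> 'm \<Rightarrow> 'm" where
  "j_f K f = (case cm K (ide1 K (t1 K f)) f of (P, p, q, l) \<Rightarrow>
     (THE z. z \<in> hom K (s1 K f) P \<and> comp1 K p z = f \<and> comp1 K q z = ide1 K (s1 K f) \<and>
             wr K l z = ide2 K f))"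

text \<open>For every object Y, the span of hom-categories K(Y,A) <- K(Y,E) -> K(Y,B)
  (given by postcomposition / whiskering with d and c) is a discrete fibration.\<close>
definition discrete_fibration :: "('o,'m,'c) two_cat \<Rightarrow> 'o \<Rightarrow> 'o \<Rightarrow> ('o,'m) span \<Rightarrow> bool" where
  "discrete_fibration K A B S \<longleftrightarrow> is_span K A B S \<and>
    (\<forall>Y\<in>obj K. \<forall>e\<in>hom K Y (sE S).
      (\<forall>u\<in>cell K. ccod K u = comp1 K (sd S) e \<longrightarrow>
         (\<exists>!ub. ub \<in> cell K \<and> ccod K ub = e \<and> wl K (sd S) ub = u \<and>
                (\<exists>g. wl K (sc S) ub = ide2 K g))) \<and>
      (\<forall>v\<in>cell K. cdom K v = comp1 K (sc S) e \<longrightarrow>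
         (\<exists>!vb. vb \<in> cell K \<and> cdom K vb = e \<and> (\<exists>g. wl K (sd S) vb = ide2 K g) \<and>
                wl K (sc S) vb = v))) \<and>
    (\<forall>Y\<in>obj K. \<forall>h\<in>cell K. cdom K h \<in> hom K Y (sE S) \<longrightarrow>
      (\<exists>a b. a \<in> cell K \<and> ccod K a = ccod K h \<and> wl K (sd S) a = wl K (sd S) h \<and>
             (\<exists>g. wl K (sc S) a = ide2 K g) \<and>
             b \<in> cell K \<and> cdom K b = cdom K h \<and> wl K (sc S) b = wl K (sc S) h \<and>
             (\<exists>g. wl K (sd S) b = ide2 K g) \<and>
             ccod K b = cdom K a \<and> h = vcomp K a b))"

end

theory Submission
  imports Defs
begin

(* Both parts rest on one extension property of a discrete fibration E2 with legs d2, c2.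
   Let P be the head of the composite with f/B, Q the head of the composite with f, and
   h : Q -> P the map induced by i_f.  The counit i_f p => 1 of f/B (whiskered by p it is the
   identity, by q it is the universal 2-cell) yields r : P -> Q with r h = 1 and a 2-cell
   sigma : h r => 1 whose image under the left leg D of the span is an identity and whose
   image under the right leg C becomes an identity after whiskering with h.  Given phi : Q -> E2
   over (D h, C h), lift C sigma opcartesianly at phi r; the codomain psi of the lift extends
   phi along h.  It is the only extension, since psi' sigma is such a lift for every extension
   psi'.  The coyoneda lemma is the yoneda lemma in the 2-category co K with reversed 2-cells,
   in which B/f is the lax pullback of f and 1_B. *)

lemma pullback_square:
  "is_pullback K f g P p1 p2 \<Longrightarrow>
   P \<in> obj K \<and> p1 \<in> hom K P (s1 K f) \<and> p2 \<in> hom K P (s1 K g) \<and> comp1 K f p1 = comp1 K g p2"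
  unfolding is_pullback_def by blast

lemma pullback_lift:
  "is_pullback K f g P p1 p2 \<Longrightarrow> Y \<in> obj K \<Longrightarrow> x \<in> hom K Y (s1 K f) \<Longrightarrow> y \<in> hom K Y (s1 K g) \<Longrightarrow>
   comp1 K f x = comp1 K g y \<Longrightarrow> \<exists>!z. z \<in> hom K Y P \<and> comp1 K p1 z = x \<and> comp1 K p2 z = y"
  unfolding is_pullback_def by blast

lemma pullback_lift_2cell:
  "is_pullback K f g P p1 p2 \<Longrightarrow> Y \<in> obj K \<Longrightarrow> z \<in> hom K Y P \<Longrightarrow> z' \<in> hom K Y P \<Longrightarrow>
   \<alpha> \<in> cell2 K (comp1 K p1 z) (comp1 K p1 z') \<Longrightarrow> \<beta> \<in> cell2 K (comp1 K p2 z) (comp1 K p2 z') \<Longrightarrow>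
   wl K f \<alpha> = wl K g \<beta> \<Longrightarrow> \<exists>!\<gamma>. \<gamma> \<in> cell2 K z z' \<and> wl K p1 \<gamma> = \<alpha> \<and> wl K p2 \<gamma> = \<beta>"
  unfolding is_pullback_def by blast

lemma comma_square:
  "is_comma K f g P p q l \<Longrightarrow>
   P \<in> obj K \<and> p \<in> hom K P (s1 K f) \<and> q \<in> hom K P (s1 K g) \<and> l \<in> cell2 K (comp1 K f p) (comp1 K g q)"
  unfolding is_comma_def by blast

lemma comma_lift_2cell:
  "is_comma K f g P p q l \<Longrightarrow> Y \<in> obj K \<Longrightarrow> z \<in> hom K Y P \<Longrightarrow> z' \<in> hom K Y P \<Longrightarrow>
   \<alpha> \<in> cell2 K (comp1 K p z) (comp1 K p z') \<Longrightarrow> \<beta> \<in> cell2 K (comp1 K q z) (comp1 K q z') \<Longrightarrow>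
   vcomp K (wl K g \<beta>) (wr K l z) = vcomp K (wr K l z') (wl K f \<alpha>) \<Longrightarrow>
   \<exists>!\<gamma>. \<gamma> \<in> cell2 K z z' \<and> wl K p \<gamma> = \<alpha> \<and> wl K q \<gamma> = \<beta>"
  unfolding is_comma_def by blast

lemma comma_lift:
  "is_comma K f g P p q l \<Longrightarrow> Y \<in> obj K \<Longrightarrow> x \<in> hom K Y (s1 K f) \<Longrightarrow> y \<in> hom K Y (s1 K g) \<Longrightarrow>
   \<theta> \<in> cell2 K (comp1 K f x) (comp1 K g y) \<Longrightarrow>
   \<exists>!z. z \<in> hom K Y P \<and> comp1 K p z = x \<and> comp1 K q z = y \<and> wr K l z = \<theta>"
  unfolding is_comma_def by blast

lemma span_sel [simp]: "sd (d, E, c) = d" "sE (d, E, c) = E" "sc (d, E, c) = c"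
  by (simp_all add: sd_def sE_def sc_def)

lemma dfib_span:
  "discrete_fibration K A B (d, E, c) \<Longrightarrow> E \<in> obj K \<and> d \<in> hom K E A \<and> c \<in> hom K E B"
  unfolding discrete_fibration_def is_span_def sd_def sE_def sc_def by simp

lemma dfib_cart_lift:
  "discrete_fibration K A B (d, E, c) \<Longrightarrow> Y \<in> obj K \<Longrightarrow> e \<in> hom K Y E \<Longrightarrow>
   u \<in> cell K \<Longrightarrow> ccod K u = comp1 K d e \<Longrightarrow>
   \<exists>!ub. ub \<in> cell K \<and> ccod K ub = e \<and> wl K d ub = u \<and> (\<exists>g. wl K c ub = ide2 K g)"
  unfolding discrete_fibration_def sd_def sE_def sc_def by simp

lemma dfib_opcart_lift:
  "discrete_fibration K A B (d, E, c) \<Longrightarrow> Y \<in> obj K \<Longrightarrow> e \<in> hom K Y E \<Longrightarrow>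
   v \<in> cell K \<Longrightarrow> cdom K v = comp1 K c e \<Longrightarrow>
   \<exists>!vb. vb \<in> cell K \<and> cdom K vb = e \<and> (\<exists>g. wl K d vb = ide2 K g) \<and> wl K c vb = v"
  unfolding discrete_fibration_def sd_def sE_def sc_def by simp

lemma dfib_factor:
  "discrete_fibration K A B (d, E, c) \<Longrightarrow> Y \<in> obj K \<Longrightarrow> h \<in> cell K \<Longrightarrow> cdom K h \<in> hom K Y E \<Longrightarrow>
   \<exists>a b. a \<in> cell K \<and> ccod K a = ccod K h \<and> wl K d a = wl K d h \<and> (\<exists>g. wl K c a = ide2 K g) \<and>
         b \<in> cell K \<and> cdom K b = cdom K h \<and> wl K c b = wl K c h \<and> (\<exists>g. wl K d b = ide2 K g) \<and>
         ccod K b = cdom K a \<and> h = vcomp K a b"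
  unfolding discrete_fibration_def sd_def sE_def sc_def by simp

lemma pb_is_pullback:
  assumes "finitely_complete K" "f \<in> arr K" "g \<in> arr K" "t1 K f = t1 K g" "pb K f g = (P, p1, p2)"
  shows "is_pullback K f g P p1 p2"
proof -
  have "\<exists>x. case x of (P, p1, p2) \<Rightarrow> is_pullback K f g P p1 p2"
    using assms(1-4) unfolding finitely_complete_def by fastforce
  from someI_ex[OF this] show ?thesis
    using assms(5) unfolding pb_def by simp
qed

lemma cm_is_comma:
  assumes "finitely_complete K" "f \<in> arr K" "g \<in> arr K" "t1 K f = t1 K g" "cm K f g = (P, p, q, l)"
  shows "is_comma K f g P p q l"
proof -
  have "\<exists>x. case x of (P, p, q, l) \<Rightarrow> is_comma K f g P p q l"
    using assms(1-4) unfolding finitely_complete_def by fastforce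
  from someI_ex[OF this] show ?thesis
    using assms(5) unfolding cm_def by simp
qed

lemma is_pullback_sym:
  assumes pb: "is_pullback K f g P p1 p2"
  shows "is_pullback K g f P p2 p1"
  unfolding is_pullback_def
proof (intro conjI ballI impI)
  show "P \<in> obj K" "p2 \<in> hom K P (s1 K g)" "p1 \<in> hom K P (s1 K f)" "comp1 K g p2 = comp1 K f p1"
    using pullback_square[OF pb] by simp_all
next
  fix Y x y
  assume "Y \<in> obj K" "x \<in> hom K Y (s1 K g)" "y \<in> hom K Y (s1 K f)" "comp1 K g x = comp1 K f y"
  from pullback_lift[OF pb this(1,3,2) this(4)[symmetric]]
  show "\<exists>!z. z \<in> hom K Y P \<and> comp1 K p2 z = x \<and> comp1 K p1 z = y"
    by (simp only: conj_ac)
next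
  fix Y z z' \<alpha> \<beta>
  assume "Y \<in> obj K" "z \<in> hom K Y P" "z' \<in> hom K Y P" "\<alpha> \<in> cell2 K (comp1 K p2 z) (comp1 K p2 z')"
    "\<beta> \<in> cell2 K (comp1 K p1 z) (comp1 K p1 z')" "wl K g \<alpha> = wl K f \<beta>"
  from pullback_lift_2cell[OF pb this(1-3,5,4) this(6)[symmetric]]
  show "\<exists>!\<gamma>. \<gamma> \<in> cell2 K z z' \<and> wl K p2 \<gamma> = \<alpha> \<and> wl K p1 \<gamma> = \<beta>"
    by (simp only: conj_ac)
qed

definition co :: "('o,'m,'c) two_cat \<Rightarrow> ('o,'m,'c) two_cat" where
  "co K = K\<lparr>cdom := ccod K, ccod := cdom K, vcomp := (\<lambda>\<beta> \<alpha>. vcomp K \<alpha> \<beta>)\<rparr>"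

lemma co_simps [simp]:
  "obj (co K) = obj K" "arr (co K) = arr K" "cell (co K) = cell K" "s1 (co K) = s1 K" "t1 (co K) = t1 K"
  "comp1 (co K) = comp1 K" "ide1 (co K) = ide1 K" "cdom (co K) = ccod K" "ccod (co K) = cdom K"
  "vcomp (co K) \<beta> \<alpha> = vcomp K \<alpha> \<beta>" "hcomp (co K) = hcomp K" "ide2 (co K) = ide2 K"
  by (simp_all add: co_def)

lemma hom_co [simp]: "hom (co K) = hom K"
  and cell2_co [simp]: "cell2 (co K) f g = cell2 K g f"
  and wl_co [simp]: "wl (co K) = wl K"
  and wr_co [simp]: "wr (co K) = wr K"
  by (auto simp: hom_def cell2_def wl_def wr_def fun_eq_iff)

lemma is_pullback_co:
  assumes pb: "is_pullback K f g P p1 p2"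
  shows "is_pullback (co K) f g P p1 p2"
  unfolding is_pullback_def co_simps hom_co cell2_co wl_co
proof (intro conjI ballI impI)
  show "P \<in> obj K" "p1 \<in> hom K P (s1 K f)" "p2 \<in> hom K P (s1 K g)" "comp1 K f p1 = comp1 K g p2"
    using pullback_square[OF pb] by simp_all
  show "\<exists>!z. z \<in> hom K Y P \<and> comp1 K p1 z = x \<and> comp1 K p2 z = y"
    if "Y \<in> obj K" "x \<in> hom K Y (s1 K f)" "y \<in> hom K Y (s1 K g)" "comp1 K f x = comp1 K g y" for Y x y
    using pullback_lift[OF pb that] .
  show "\<exists>!\<gamma>. \<gamma> \<in> cell2 K z' z \<and> wl K p1 \<gamma> = \<alpha> \<and> wl K p2 \<gamma> = \<beta>"
    if "Y \<in> obj K" "z \<in> hom K Y P" "z' \<in> hom K Y P" "\<alpha> \<in> cell2 K (comp1 K p1 z') (comp1 K p1 z)"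
      "\<beta> \<in> cell2 K (comp1 K p2 z') (comp1 K p2 z)" "wl K f \<alpha> = wl K g \<beta>" for Y z z' \<alpha> \<beta>
    using pullback_lift_2cell[OF pb that(1,3,2,4-6)] .
qed

lemma is_comma_co:
  assumes comma: "is_comma K g f P q p l"
  shows "is_comma (co K) f g P p q l"
  unfolding is_comma_def co_simps hom_co cell2_co wl_co wr_co
proof (intro conjI ballI impI)
  show "P \<in> obj K" "p \<in> hom K P (s1 K f)" "q \<in> hom K P (s1 K g)" "l \<in> cell2 K (comp1 K g q) (comp1 K f p)"
    using comma_square[OF comma] by simp_all
next
  fix Y x y \<theta>
  assume "Y \<in> obj K" "x \<in> hom K Y (s1 K f)" "y \<in> hom K Y (s1 K g)" "\<theta> \<in> cell2 K (comp1 K g y) (comp1 K f x)"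
  from comma_lift[OF comma this(1,3,2,4)]
  show "\<exists>!z. z \<in> hom K Y P \<and> comp1 K p z = x \<and> comp1 K q z = y \<and> wr K l z = \<theta>"
    by (simp only: conj_ac)
next
  fix Y z z' \<alpha> \<beta>
  assume "Y \<in> obj K" "z \<in> hom K Y P" "z' \<in> hom K Y P" "\<alpha> \<in> cell2 K (comp1 K p z') (comp1 K p z)"
    "\<beta> \<in> cell2 K (comp1 K q z') (comp1 K q z)" "vcomp K (wr K l z) (wl K g \<beta>) = vcomp K (wl K f \<alpha>) (wr K l z')"
  from comma_lift_2cell[OF comma this(1,3,2,5,4) this(6)[symmetric]]
  show "\<exists>!\<gamma>. \<gamma> \<in> cell2 K z' z \<and> wl K p \<gamma> = \<alpha> \<and> wl K q \<gamma> = \<beta>"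
    by (simp only: conj_ac)
qed

locale strict_two_category =
  fixes K :: "('o,'m,'c) two_cat"
  assumes two_cat: "two_category K"
begin

lemma s1_in_obj [simp]: "f \<in> arr K \<Longrightarrow> s1 K f \<in> obj K"
  and t1_in_obj [simp]: "f \<in> arr K \<Longrightarrow> t1 K f \<in> obj K"
  using two_cat unfolding two_category_def by (elim conjE; metis)+

lemma ide1_arr [simp]: "a \<in> obj K \<Longrightarrow> ide1 K a \<in> arr K"
  and s1_ide1 [simp]: "a \<in> obj K \<Longrightarrow> s1 K (ide1 K a) = a"
  and t1_ide1 [simp]: "a \<in> obj K \<Longrightarrow> t1 K (ide1 K a) = a"
  using two_cat unfolding two_category_def hom_def mem_Collect_eq by (elim conjE; metis)+

lemma comp1_arr [simp]: "f \<in> arr K \<Longrightarrow> g \<in> arr K \<Longrightarrow> t1 K f = s1 K g \<Longrightarrow> comp1 K g f \<in> arr K"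
  and s1_comp1 [simp]: "f \<in> arr K \<Longrightarrow> g \<in> arr K \<Longrightarrow> t1 K f = s1 K g \<Longrightarrow> s1 K (comp1 K g f) = s1 K f"
  and t1_comp1 [simp]: "f \<in> arr K \<Longrightarrow> g \<in> arr K \<Longrightarrow> t1 K f = s1 K g \<Longrightarrow> t1 K (comp1 K g f) = t1 K g"
  using two_cat unfolding two_category_def hom_def mem_Collect_eq by (elim conjE; metis)+

lemma comp1_assoc [simp]:
  "f \<in> arr K \<Longrightarrow> g \<in> arr K \<Longrightarrow> h \<in> arr K \<Longrightarrow> t1 K f = s1 K g \<Longrightarrow> t1 K g = s1 K h \<Longrightarrow>
   comp1 K (comp1 K h g) f = comp1 K h (comp1 K g f)"
  using two_cat unfolding two_category_def by (elim conjE; metis)+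

lemma comp1_ide1_left [simp]: "f \<in> arr K \<Longrightarrow> t1 K f = b \<Longrightarrow> comp1 K (ide1 K b) f = f"
  and comp1_ide1_right [simp]: "f \<in> arr K \<Longrightarrow> s1 K f = a \<Longrightarrow> comp1 K f (ide1 K a) = f"
  using two_cat unfolding two_category_def by (elim conjE; metis)+

lemma cdom_arr [simp]: "\<alpha> \<in> cell K \<Longrightarrow> cdom K \<alpha> \<in> arr K"
  and ccod_arr [simp]: "\<alpha> \<in> cell K \<Longrightarrow> ccod K \<alpha> \<in> arr K"
  and s1_ccod [simp]: "\<alpha> \<in> cell K \<Longrightarrow> s1 K (ccod K \<alpha>) = s1 K (cdom K \<alpha>)"
  and t1_ccod [simp]: "\<alpha> \<in> cell K \<Longrightarrow> t1 K (ccod K \<alpha>) = t1 K (cdom K \<alpha>)"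
  using two_cat unfolding two_category_def by (elim conjE; metis)+

lemma ide2_cell [simp]: "f \<in> arr K \<Longrightarrow> ide2 K f \<in> cell K"
  and cdom_ide2 [simp]: "f \<in> arr K \<Longrightarrow> cdom K (ide2 K f) = f"
  and ccod_ide2 [simp]: "f \<in> arr K \<Longrightarrow> ccod K (ide2 K f) = f"
  using two_cat unfolding two_category_def cell2_def mem_Collect_eq by (elim conjE; metis)+

lemma vcomp_cell [simp]:
    "\<alpha> \<in> cell K \<Longrightarrow> \<beta> \<in> cell K \<Longrightarrow> ccod K \<alpha> = cdom K \<beta> \<Longrightarrow> vcomp K \<beta> \<alpha> \<in> cell K"
  and cdom_vcomp [simp]:
    "\<alpha> \<in> cell K \<Longrightarrow> \<beta> \<in> cell K \<Longrightarrow> ccod K \<alpha> = cdom K \<beta> \<Longrightarrow> cdom K (vcomp K \<beta> \<alpha>) = cdom K \<alpha>"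
  and ccod_vcomp [simp]:
    "\<alpha> \<in> cell K \<Longrightarrow> \<beta> \<in> cell K \<Longrightarrow> ccod K \<alpha> = cdom K \<beta> \<Longrightarrow> ccod K (vcomp K \<beta> \<alpha>) = ccod K \<beta>"
  using two_cat unfolding two_category_def cell2_def mem_Collect_eq by (elim conjE; metis)+

lemma vcomp_assoc:
  "\<alpha> \<in> cell K \<Longrightarrow> \<beta> \<in> cell K \<Longrightarrow> \<gamma> \<in> cell K \<Longrightarrow> ccod K \<alpha> = cdom K \<beta> \<Longrightarrow> ccod K \<beta> = cdom K \<gamma> \<Longrightarrow>
   vcomp K \<gamma> (vcomp K \<beta> \<alpha>) = vcomp K (vcomp K \<gamma> \<beta>) \<alpha>"
  using two_cat unfolding two_category_def by (elim conjE; metis)+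

lemma vcomp_ide2_left [simp]: "\<alpha> \<in> cell K \<Longrightarrow> ccod K \<alpha> = g \<Longrightarrow> vcomp K (ide2 K g) \<alpha> = \<alpha>"
  and vcomp_ide2_right [simp]: "\<alpha> \<in> cell K \<Longrightarrow> cdom K \<alpha> = g \<Longrightarrow> vcomp K \<alpha> (ide2 K g) = \<alpha>"
  using two_cat unfolding two_category_def by (elim conjE; metis)+

lemma hcomp_cell:
  "\<alpha> \<in> cell K \<Longrightarrow> \<beta> \<in> cell K \<Longrightarrow> t1 K (cdom K \<alpha>) = s1 K (cdom K \<beta>) \<Longrightarrow>
   hcomp K \<beta> \<alpha> \<in> cell2 K (comp1 K (cdom K \<beta>) (cdom K \<alpha>)) (comp1 K (ccod K \<beta>) (ccod K \<alpha>))"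
  using two_cat unfolding two_category_def by (elim conjE; metis)+

lemma hcomp_assoc:
  "\<alpha> \<in> cell K \<Longrightarrow> \<beta> \<in> cell K \<Longrightarrow> \<gamma> \<in> cell K \<Longrightarrow>
   t1 K (cdom K \<alpha>) = s1 K (cdom K \<beta>) \<Longrightarrow> t1 K (cdom K \<beta>) = s1 K (cdom K \<gamma>) \<Longrightarrow>
   hcomp K \<gamma> (hcomp K \<beta> \<alpha>) = hcomp K (hcomp K \<gamma> \<beta>) \<alpha>"
  using two_cat unfolding two_category_def by (elim conjE; metis)+

lemma hcomp_ide1_left: "\<alpha> \<in> cell K \<Longrightarrow> hcomp K (ide2 K (ide1 K (t1 K (cdom K \<alpha>)))) \<alpha> = \<alpha>"
  and hcomp_ide1_right: "\<alpha> \<in> cell K \<Longrightarrow> hcomp K \<alpha> (ide2 K (ide1 K (s1 K (cdom K \<alpha>)))) = \<alpha>"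
  using two_cat unfolding two_category_def by (elim conjE; metis)+

lemma hcomp_ide2:
  "f \<in> arr K \<Longrightarrow> g \<in> arr K \<Longrightarrow> t1 K f = s1 K g \<Longrightarrow> hcomp K (ide2 K g) (ide2 K f) = ide2 K (comp1 K g f)"
  using two_cat unfolding two_category_def by (elim conjE; metis)+

lemma interchange:
  "\<alpha> \<in> cell K \<Longrightarrow> \<alpha>' \<in> cell K \<Longrightarrow> \<beta> \<in> cell K \<Longrightarrow> \<beta>' \<in> cell K \<Longrightarrow>
   ccod K \<alpha> = cdom K \<alpha>' \<Longrightarrow> ccod K \<beta> = cdom K \<beta>' \<Longrightarrow> t1 K (cdom K \<alpha>) = s1 K (cdom K \<beta>) \<Longrightarrow>
   hcomp K (vcomp K \<beta>' \<beta>) (vcomp K \<alpha>' \<alpha>) = vcomp K (hcomp K \<beta>' \<alpha>') (hcomp K \<beta> \<alpha>)"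
  using two_cat unfolding two_category_def by (elim conjE; metis)+

lemma wl_cell [simp]: "g \<in> arr K \<Longrightarrow> \<alpha> \<in> cell K \<Longrightarrow> t1 K (cdom K \<alpha>) = s1 K g \<Longrightarrow> wl K g \<alpha> \<in> cell K"
  and cdom_wl [simp]:
    "g \<in> arr K \<Longrightarrow> \<alpha> \<in> cell K \<Longrightarrow> t1 K (cdom K \<alpha>) = s1 K g \<Longrightarrow> cdom K (wl K g \<alpha>) = comp1 K g (cdom K \<alpha>)"
  and ccod_wl [simp]:
    "g \<in> arr K \<Longrightarrow> \<alpha> \<in> cell K \<Longrightarrow> t1 K (cdom K \<alpha>) = s1 K g \<Longrightarrow> ccod K (wl K g \<alpha>) = comp1 K g (ccod K \<alpha>)"
  using hcomp_cell[of \<alpha> "ide2 K g"] unfolding wl_def cell2_def by auto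

lemma wr_cell [simp]: "f \<in> arr K \<Longrightarrow> \<alpha> \<in> cell K \<Longrightarrow> t1 K f = s1 K (cdom K \<alpha>) \<Longrightarrow> wr K \<alpha> f \<in> cell K"
  and cdom_wr [simp]:
    "f \<in> arr K \<Longrightarrow> \<alpha> \<in> cell K \<Longrightarrow> t1 K f = s1 K (cdom K \<alpha>) \<Longrightarrow> cdom K (wr K \<alpha> f) = comp1 K (cdom K \<alpha>) f"
  and ccod_wr [simp]:
    "f \<in> arr K \<Longrightarrow> \<alpha> \<in> cell K \<Longrightarrow> t1 K f = s1 K (cdom K \<alpha>) \<Longrightarrow> ccod K (wr K \<alpha> f) = comp1 K (ccod K \<alpha>) f"
  using hcomp_cell[of "ide2 K f" \<alpha>] unfolding wr_def cell2_def by auto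

lemma wl_ide2 [simp]:
    "f \<in> arr K \<Longrightarrow> g \<in> arr K \<Longrightarrow> t1 K f = s1 K g \<Longrightarrow> wl K g (ide2 K f) = ide2 K (comp1 K g f)"
  and wr_ide2 [simp]:
    "f \<in> arr K \<Longrightarrow> g \<in> arr K \<Longrightarrow> t1 K f = s1 K g \<Longrightarrow> wr K (ide2 K g) f = ide2 K (comp1 K g f)"
  unfolding wl_def wr_def by (auto simp: hcomp_ide2)

lemma wl_wl [simp]:
  "\<alpha> \<in> cell K \<Longrightarrow> h \<in> arr K \<Longrightarrow> g \<in> arr K \<Longrightarrow> t1 K (cdom K \<alpha>) = s1 K h \<Longrightarrow> t1 K h = s1 K g \<Longrightarrow>
   wl K g (wl K h \<alpha>) = wl K (comp1 K g h) \<alpha>"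
  unfolding wl_def by (simp add: hcomp_assoc hcomp_ide2)

lemma wr_wr [simp]:
  "\<alpha> \<in> cell K \<Longrightarrow> f \<in> arr K \<Longrightarrow> g \<in> arr K \<Longrightarrow> t1 K f = s1 K (cdom K \<alpha>) \<Longrightarrow> t1 K g = s1 K f \<Longrightarrow>
   wr K (wr K \<alpha> f) g = wr K \<alpha> (comp1 K f g)"
  unfolding wr_def by (subst hcomp_assoc[symmetric]) (auto simp: hcomp_ide2)

lemma wl_wr [simp]:
  "\<alpha> \<in> cell K \<Longrightarrow> f \<in> arr K \<Longrightarrow> g \<in> arr K \<Longrightarrow> t1 K f = s1 K (cdom K \<alpha>) \<Longrightarrow> t1 K (cdom K \<alpha>) = s1 K g \<Longrightarrow>
   wl K g (wr K \<alpha> f) = wr K (wl K g \<alpha>) f"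
  unfolding wr_def wl_def by (simp add: hcomp_assoc)

lemma wl_ide1 [simp]: "\<alpha> \<in> cell K \<Longrightarrow> t1 K (cdom K \<alpha>) = b \<Longrightarrow> wl K (ide1 K b) \<alpha> = \<alpha>"
  unfolding wl_def using hcomp_ide1_left by auto

lemma wr_ide1 [simp]: "\<alpha> \<in> cell K \<Longrightarrow> s1 K (cdom K \<alpha>) = a \<Longrightarrow> wr K \<alpha> (ide1 K a) = \<alpha>"
  unfolding wr_def using hcomp_ide1_right by auto

lemma wl_vcomp:
  assumes "\<alpha> \<in> cell K" "\<beta> \<in> cell K" "ccod K \<alpha> = cdom K \<beta>" "g \<in> arr K" "t1 K (cdom K \<alpha>) = s1 K g"
  shows "wl K g (vcomp K \<beta> \<alpha>) = vcomp K (wl K g \<beta>) (wl K g \<alpha>)"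
proof -
  have "wl K g (vcomp K \<beta> \<alpha>) = hcomp K (vcomp K (ide2 K g) (ide2 K g)) (vcomp K \<beta> \<alpha>)"
    unfolding wl_def using assms by simp
  also have "\<dots> = vcomp K (wl K g \<beta>) (wl K g \<alpha>)"
    unfolding wl_def using assms by (intro interchange) auto
  finally show ?thesis .
qed

lemma wr_vcomp:
  assumes "\<alpha> \<in> cell K" "\<beta> \<in> cell K" "ccod K \<alpha> = cdom K \<beta>" "f \<in> arr K" "t1 K f = s1 K (cdom K \<alpha>)"
  shows "wr K (vcomp K \<beta> \<alpha>) f = vcomp K (wr K \<beta> f) (wr K \<alpha> f)"
proof -
  have "wr K (vcomp K \<beta> \<alpha>) f = hcomp K (vcomp K \<beta> \<alpha>) (vcomp K (ide2 K f) (ide2 K f))"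
    unfolding wr_def using assms by simp
  also have "\<dots> = vcomp K (wr K \<beta> f) (wr K \<alpha> f)"
    unfolding wr_def using assms by (intro interchange) auto
  finally show ?thesis .
qed

lemma two_category_co: "two_category (co K)"
  unfolding two_category_def co_simps hom_co cell2_co
proof (intro conjI ballI impI; (elim conjE)?)
  fix \<alpha> \<alpha>' \<beta> \<beta>'
  assume "\<alpha> \<in> cell K" "\<alpha>' \<in> cell K" "\<beta> \<in> cell K" "\<beta>' \<in> cell K" "cdom K \<alpha> = ccod K \<alpha>'"
    "cdom K \<beta> = ccod K \<beta>'" "t1 K (ccod K \<alpha>) = s1 K (ccod K \<beta>)"
  then show "hcomp K (vcomp K \<beta> \<beta>') (vcomp K \<alpha> \<alpha>') = vcomp K (hcomp K \<beta> \<alpha>) (hcomp K \<beta>' \<alpha>')"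
    by (metis interchange t1_ccod s1_ccod)
qed (auto simp: hom_def cell2_def vcomp_assoc hcomp_assoc hcomp_ide1_left hcomp_ide1_right hcomp_ide2
    dest: hcomp_cell)

lemma discrete_fibration_co:
  assumes df: "discrete_fibration K A B (d, E, c)"
  shows "discrete_fibration (co K) B A (c, E, d)"
  unfolding discrete_fibration_def is_span_def sd_def sE_def sc_def fst_conv snd_conv
    co_simps hom_co wl_co
proof (intro conjI ballI allI impI)
  show "E \<in> obj K" "c \<in> hom K E B" "d \<in> hom K E A"
    using dfib_span[OF df] by blast+
next
  fix Y e u
  assume "Y \<in> obj K" "e \<in> hom K Y E" "u \<in> cell K" "cdom K u = comp1 K c e"
  from dfib_opcart_lift[OF df this]
  show "\<exists>!ub. ub \<in> cell K \<and> cdom K ub = e \<and> wl K c ub = u \<and> (\<exists>g. wl K d ub = ide2 K g)"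
    by (simp only: conj_ac)
next
  fix Y e v
  assume "Y \<in> obj K" "e \<in> hom K Y E" "v \<in> cell K" "ccod K v = comp1 K d e"
  from dfib_cart_lift[OF df this]
  show "\<exists>!vb. vb \<in> cell K \<and> ccod K vb = e \<and> (\<exists>g. wl K c vb = ide2 K g) \<and> wl K d vb = v"
    by (simp only: conj_ac)
next
  fix Y h
  assume "Y \<in> obj K" "h \<in> cell K" "ccod K h \<in> hom K Y E"
  then have "cdom K h \<in> hom K Y E"
    by (simp add: hom_def)
  from dfib_factor[OF df \<open>Y \<in> obj K\<close> \<open>h \<in> cell K\<close> this]
  show "\<exists>a b. a \<in> cell K \<and> cdom K a = cdom K h \<and> wl K c a = wl K c h \<and> (\<exists>g. wl K d a = ide2 K g) \<and>
         b \<in> cell K \<and> ccod K b = ccod K h \<and> wl K d b = wl K d h \<and> (\<exists>g. wl K c b = ide2 K g) \<and>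
         cdom K b = ccod K a \<and> h = vcomp K b a"
    by metis
qed

lemma wr_ide2_absorbing:
  assumes x: "x \<in> cell K" and \<Lambda>: "\<Lambda> \<in> cell K" "ccod K \<Lambda> = cdom K x" "vcomp K x \<Lambda> = \<Lambda>"
    and h: "h \<in> arr K" "t1 K h = s1 K (cdom K \<Lambda>)" and \<Lambda>h: "wr K \<Lambda> h = ide2 K (comp1 K (ccod K \<Lambda>) h)"
  shows "wr K x h = ide2 K (comp1 K (ccod K \<Lambda>) h)"
proof -
  have xh: "t1 K h = s1 K (cdom K x)"
    using \<Lambda> h by (metis s1_ccod)
  have "ide2 K (comp1 K (ccod K \<Lambda>) h) = wr K (vcomp K x \<Lambda>) h"
    using \<Lambda>h \<Lambda>(3) by simp
  also have "\<dots> = vcomp K (wr K x h) (wr K \<Lambda> h)"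
    using x \<Lambda> h by (intro wr_vcomp) simp_all
  also have "\<dots> = wr K x h"
    using x \<Lambda> h \<Lambda>h xh by simp
  finally show ?thesis ..
qed

(* In discrete_fibration a vertical lift vb is one with wl K d vb = ide2 K g for some g, and g
   need not be an arrow, so nothing about the endpoints of vb follows directly.  The factorisation
   axiom supplies an endomorphism of ccod K vb with the same image under d, which suffices. *)

lemma dfib_opcart_lift_absorbs:
  assumes df: "discrete_fibration K A B (d, E, c)" and Y: "Y \<in> obj K"
    and vb: "vb \<in> cell K" "cdom K vb \<in> hom K Y E" "\<exists>g. wl K d vb = ide2 K g"
  obtains a where "a \<in> cell K" "cdom K a = ccod K vb" "ccod K a = ccod K vb" "wl K d a = wl K d vb"
    "vcomp K a vb = vb"
proof -
  obtain a b where ab: "a \<in> cell K" "ccod K a = ccod K vb" "wl K d a = wl K d vb"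
      "b \<in> cell K" "cdom K b = cdom K vb" "wl K c b = wl K c vb" "\<exists>g. wl K d b = ide2 K g"
      "ccod K b = cdom K a" "vb = vcomp K a b"
    using dfib_factor[OF df Y vb(1,2)] by blast
  have "c \<in> hom K E B"
    using dfib_span[OF df] by blast
  then have "\<exists>!w. w \<in> cell K \<and> cdom K w = cdom K vb \<and> (\<exists>g. wl K d w = ide2 K g) \<and> wl K c w = wl K c vb"
    using vb by (intro dfib_opcart_lift[OF df Y]) (auto simp: hom_def)
  then have "b = vb"
    using ab vb by blast
  then show ?thesis
    using that ab by simp
qed

lemma dfib_opcart_lift_vertical:
  assumes df: "discrete_fibration K A B (d, E, c)" and Y: "Y \<in> obj K"
    and vb: "vb \<in> cell K" "cdom K vb \<in> hom K Y E" "\<exists>g. wl K d vb = ide2 K g"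
  shows "comp1 K d (ccod K vb) = comp1 K d (cdom K vb)"
proof -
  obtain a where a: "a \<in> cell K" "cdom K a = ccod K vb" "wl K d a = wl K d vb"
    using dfib_opcart_lift_absorbs[OF df Y vb] by blast
  have [simp]: "d \<in> arr K" "s1 K d = E"
    using dfib_span[OF df] by (simp_all add: hom_def)
  have "comp1 K d (ccod K vb) = cdom K (wl K d a)"
    using a(1,2) vb(1,2) by (simp add: hom_def)
  also have "\<dots> = comp1 K d (cdom K vb)"
    using a vb by (simp add: hom_def)
  finally show ?thesis .
qed

lemma dfib_opcart_lift_whisker:
  assumes df: "discrete_fibration K A B (d, E, c)" and Y: "Y \<in> obj K"
    and vb: "vb \<in> cell K" "cdom K vb \<in> hom K Y E" "\<exists>g. wl K d vb = ide2 K g"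
    and h: "h \<in> arr K" "t1 K h = Y"
    and ide: "wr K (wl K c vb) h = ide2 K (comp1 K (ccod K (wl K c vb)) h)"
  shows "comp1 K (cdom K vb) h = comp1 K (ccod K vb) h"
proof -
  obtain a where a: "a \<in> cell K" "cdom K a = ccod K vb" "ccod K a = ccod K vb"
      "wl K d a = wl K d vb" "vcomp K a vb = vb"
    using dfib_opcart_lift_absorbs[OF df Y vb] by blast
  have [simp]: "d \<in> arr K" "s1 K d = E" "c \<in> arr K" "s1 K c = E"
    using dfib_span[OF df] by (simp_all add: hom_def)
  have [simp]: "s1 K (cdom K vb) = Y" "t1 K (cdom K vb) = E"
    using vb(2) by (simp_all add: hom_def)
  have c_cells: "wl K c a \<in> cell K" "wl K c vb \<in> cell K" "ccod K (wl K c vb) = cdom K (wl K c a)"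
    "t1 K h = s1 K (cdom K (wl K c vb))"
    using a(1-3) vb(1) h by simp_all
  have "vcomp K (wl K c a) (wl K c vb) = wl K c vb"
    using a vb by (metis wl_vcomp t1_ccod \<open>s1 K c = E\<close> \<open>c \<in> arr K\<close> \<open>t1 K (cdom K vb) = E\<close>)
  from wr_ide2_absorbing[OF c_cells(1-3) this h(1) c_cells(4) ide]
  have ca: "wr K (wl K c a) h = ide2 K (comp1 K (ccod K (wl K c vb)) h)" .
  have "\<exists>!u. u \<in> cell K \<and> ccod K u = comp1 K (ccod K vb) h \<and> wl K d u = wr K (wl K d vb) h \<and>
      (\<exists>g. wl K c u = ide2 K g)"
    using vb h by (intro dfib_cart_lift[OF df, of "s1 K h"]) (simp_all add: hom_def)
  moreover have "wr K vb h \<in> cell K \<and> ccod K (wr K vb h) = comp1 K (ccod K vb) h \<and>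
      wl K d (wr K vb h) = wr K (wl K d vb) h \<and> (\<exists>g. wl K c (wr K vb h) = ide2 K g)"
    using vb h ide by (simp; blast)
  moreover have "wr K a h \<in> cell K \<and> ccod K (wr K a h) = comp1 K (ccod K vb) h \<and>
      wl K d (wr K a h) = wr K (wl K d vb) h \<and> (\<exists>g. wl K c (wr K a h) = ide2 K g)"
    using a(1-4) vb(1) h ca by (simp; blast)
  ultimately have "wr K vb h = wr K a h"
    by (metis (no_types, lifting))
  then have "cdom K (wr K vb h) = cdom K (wr K a h)"
    by simp
  then show ?thesis
    using a vb h by simp
qed

lemma dfib_restriction_inj:
  assumes df: "discrete_fibration K X B (d, E, c)"
    and h: "h \<in> hom K Q P" and r: "r \<in> hom K P Q"
    and \<sigma>: "\<sigma> \<in> cell2 K (comp1 K h r) (ide1 K P)" and D\<sigma>: "wl K D \<sigma> = ide2 K D"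
    and \<psi>: "\<psi> \<in> hom K P E" "comp1 K d \<psi> = D" and \<psi>': "\<psi>' \<in> hom K P E" "comp1 K d \<psi>' = D"
    and c: "comp1 K c \<psi> = comp1 K c \<psi>'" and restr: "comp1 K \<psi> h = comp1 K \<psi>' h"
  shows "\<psi> = \<psi>'"
proof -
  have [simp]: "h \<in> arr K" "s1 K h = Q" "t1 K h = P" "r \<in> arr K" "s1 K r = P" "t1 K r = Q"
    "\<sigma> \<in> cell K" "cdom K \<sigma> = comp1 K h r" "ccod K \<sigma> = ide1 K P"
    using h r \<sigma> by (simp_all add: hom_def cell2_def)
  have [simp]: "d \<in> arr K" "s1 K d = E" "c \<in> arr K" "s1 K c = E"
    using dfib_span[OF df] by (simp_all add: hom_def)
  have whiskered_lift: "wl K x \<sigma> \<in> cell K \<and> cdom K (wl K x \<sigma>) = comp1 K (comp1 K \<psi> h) r \<and>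
      (\<exists>g. wl K d (wl K x \<sigma>) = ide2 K g) \<and> wl K c (wl K x \<sigma>) = wl K (comp1 K c \<psi>) \<sigma>"
    if "x \<in> hom K P E" "comp1 K d x = D" "comp1 K c x = comp1 K c \<psi>" "comp1 K x h = comp1 K \<psi> h" for x
  proof -
    have x: "x \<in> arr K" "s1 K x = P" "t1 K x = E"
      using that(1) by (simp_all add: hom_def)
    have "comp1 K x (comp1 K h r) = comp1 K (comp1 K x h) r"
      using x by simp
    then show ?thesis
      using that x D\<sigma> by auto
  qed
  have "\<exists>!w. w \<in> cell K \<and> cdom K w = comp1 K (comp1 K \<psi> h) r \<and> (\<exists>g. wl K d w = ide2 K g) \<and>
      wl K c w = wl K (comp1 K c \<psi>) \<sigma>"
    using \<psi> by (intro dfib_opcart_lift[OF df]) (auto simp: hom_def)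
  moreover note whiskered_lift[OF \<psi> refl refl] whiskered_lift[OF \<psi>' c[symmetric] restr[symmetric]]
  ultimately have "wl K \<psi> \<sigma> = wl K \<psi>' \<sigma>"
    by (metis (no_types, lifting))
  then have "ccod K (wl K \<psi> \<sigma>) = ccod K (wl K \<psi>' \<sigma>)"
    by simp
  then show ?thesis
    using \<psi> \<psi>' by (simp add: hom_def)
qed

lemma dfib_extension_exists:
  assumes df: "discrete_fibration K X B (d, E, c)"
    and h: "h \<in> hom K Q P" and r: "r \<in> hom K P Q" and rh: "comp1 K r h = ide1 K Q"
    and D: "D \<in> hom K P X" and C: "C \<in> hom K P B"
    and \<sigma>: "\<sigma> \<in> cell2 K (comp1 K h r) (ide1 K P)"
    and D\<sigma>: "wl K D \<sigma> = ide2 K D" and C\<sigma>h: "wr K (wl K C \<sigma>) h = ide2 K (comp1 K C h)"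
    and \<phi>: "\<phi> \<in> hom K Q E" "comp1 K d \<phi> = comp1 K D h" "comp1 K c \<phi> = comp1 K C h"
  obtains \<psi> where "\<psi> \<in> hom K P E" "comp1 K d \<psi> = D" "comp1 K c \<psi> = C" "comp1 K \<psi> h = \<phi>"
proof -
  have [simp]: "h \<in> arr K" "s1 K h = Q" "t1 K h = P" "r \<in> arr K" "s1 K r = P" "t1 K r = Q"
    "D \<in> arr K" "s1 K D = P" "C \<in> arr K" "s1 K C = P" "t1 K C = B" "\<phi> \<in> arr K" "s1 K \<phi> = Q" "t1 K \<phi> = E"
    "\<sigma> \<in> cell K" "cdom K \<sigma> = comp1 K h r" "ccod K \<sigma> = ide1 K P"
    using h r D C \<phi> \<sigma> by (simp_all add: hom_def cell2_def)
  have [simp]: "d \<in> arr K" "s1 K d = E" "c \<in> arr K" "s1 K c = E" "t1 K c = B"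
    using dfib_span[OF df] by (simp_all add: hom_def)
  have P: "P \<in> obj K"
    using t1_in_obj[of h] by simp
  have e: "comp1 K \<phi> r \<in> hom K P E"
    by (simp add: hom_def)
  have "cdom K (wl K C \<sigma>) = comp1 K (comp1 K C h) r"
    by simp
  also have "\<dots> = comp1 K (comp1 K c \<phi>) r"
    using \<phi>(3) by simp
  also have "\<dots> = comp1 K c (comp1 K \<phi> r)"
    by simp
  finally have \<Lambda>: "wl K C \<sigma> \<in> cell K" "cdom K (wl K C \<sigma>) = comp1 K c (comp1 K \<phi> r)"
    by simp_all
  obtain vb where vb: "vb \<in> cell K" "cdom K vb = comp1 K \<phi> r" "\<exists>g. wl K d vb = ide2 K g"
      "wl K c vb = wl K C \<sigma>"
    using dfib_opcart_lift[OF df P e \<Lambda>] by blast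
  have vb_hom: "cdom K vb \<in> hom K P E"
    using vb(2) e by simp
  show ?thesis
  proof
    show "ccod K vb \<in> hom K P E"
      using vb(1) vb_hom by (simp add: hom_def)
    have "comp1 K d (ccod K vb) = comp1 K (comp1 K d \<phi>) r"
      using dfib_opcart_lift_vertical[OF df P vb(1) vb_hom vb(3)] vb(2) by simp
    also have "\<dots> = comp1 K D (comp1 K h r)"
      using \<phi>(2) by simp
    also have "\<dots> = D"
      using arg_cong[OF D\<sigma>, of "cdom K"] by simp
    finally show "comp1 K d (ccod K vb) = D" .
    show "comp1 K c (ccod K vb) = C"
      using arg_cong[OF vb(4), of "ccod K"] vb(1,2) by simp
    have "wr K (wl K c vb) h = ide2 K (comp1 K (ccod K (wl K c vb)) h)"
      using vb(4) C\<sigma>h by simp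
    from dfib_opcart_lift_whisker[OF df P vb(1) vb_hom vb(3) _ _ this]
    show "comp1 K (ccod K vb) h = \<phi>"
      using vb(2) rh by simp
  qed
qed

lemma dfib_extension_unique:
  assumes df: "discrete_fibration K X B (d, E, c)"
    and h: "h \<in> hom K Q P" and r: "r \<in> hom K P Q" and rh: "comp1 K r h = ide1 K Q"
    and D: "D \<in> hom K P X" and C: "C \<in> hom K P B"
    and \<sigma>: "\<sigma> \<in> cell2 K (comp1 K h r) (ide1 K P)"
    and D\<sigma>: "wl K D \<sigma> = ide2 K D" and C\<sigma>h: "wr K (wl K C \<sigma>) h = ide2 K (comp1 K C h)"
    and \<phi>: "\<phi> \<in> hom K Q E" "comp1 K d \<phi> = comp1 K D h" "comp1 K c \<phi> = comp1 K C h"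
  shows "\<exists>!\<psi>. \<psi> \<in> hom K P E \<and> comp1 K d \<psi> = D \<and> comp1 K c \<psi> = C \<and> comp1 K \<psi> h = \<phi>"
proof -
  obtain \<psi> where \<psi>: "\<psi> \<in> hom K P E" "comp1 K d \<psi> = D" "comp1 K c \<psi> = C" "comp1 K \<psi> h = \<phi>"
    using dfib_extension_exists[OF assms] .
  show ?thesis
  proof (rule ex1I)
    show "\<psi> \<in> hom K P E \<and> comp1 K d \<psi> = D \<and> comp1 K c \<psi> = C \<and> comp1 K \<psi> h = \<phi>"
      using \<psi> by blast
    fix \<psi>'
    assume \<psi>': "\<psi>' \<in> hom K P E \<and> comp1 K d \<psi>' = D \<and> comp1 K c \<psi>' = C \<and> comp1 K \<psi>' h = \<phi>"
    then have "\<psi>' \<in> hom K P E" "comp1 K d \<psi>' = D" "comp1 K c \<psi>' = comp1 K c \<psi>" "comp1 K \<psi>' h = comp1 K \<psi> h"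
      using \<psi> by simp_all
    then show "\<psi>' = \<psi>"
      using dfib_restriction_inj[OF df h r \<sigma> D\<sigma>] \<psi>(1,2) by blast
  qed
qed

lemma pullback_hom_ext:
  assumes pb: "is_pullback K f g P p1 p2" and fg: "f \<in> arr K" "g \<in> arr K"
    and z: "z \<in> hom K Y P" "z' \<in> hom K Y P"
    and eq: "comp1 K p1 z = comp1 K p1 z'" "comp1 K p2 z = comp1 K p2 z'"
  shows "z = z'"
proof -
  have [simp]: "p1 \<in> arr K" "s1 K p1 = P" "t1 K p1 = s1 K f" "p2 \<in> arr K" "s1 K p2 = P" "t1 K p2 = s1 K g"
    "z \<in> arr K" "s1 K z = Y" "t1 K z = P"
    using pullback_square[OF pb] z(1) by (simp_all add: hom_def)
  have "Y \<in> obj K"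
    using s1_in_obj[of z] by simp
  have "comp1 K f (comp1 K p1 z) = comp1 K (comp1 K f p1) z"
    using fg by simp
  also have "\<dots> = comp1 K g (comp1 K p2 z)"
    using pullback_square[OF pb] fg by simp
  finally have "\<exists>!w. w \<in> hom K Y P \<and> comp1 K p1 w = comp1 K p1 z \<and> comp1 K p2 w = comp1 K p2 z"
    using z \<open>Y \<in> obj K\<close> by (intro pullback_lift[OF pb]) (simp_all add: hom_def)
  moreover have "z' \<in> hom K Y P \<and> comp1 K p1 z' = comp1 K p1 z \<and> comp1 K p2 z' = comp1 K p2 z"
    using z(2) eq by simp
  ultimately show ?thesis
    using z(1) by (metis (no_types, lifting))
qed

lemma comma_counit:
  assumes comma: "is_comma K f (ide1 K B) P p q l" and f: "f \<in> hom K A B"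
    and i: "i \<in> hom K A P" "comp1 K p i = ide1 K A" "comp1 K q i = f" "wr K l i = ide2 K f"
  obtains \<sigma> where "\<sigma> \<in> cell2 K (comp1 K i p) (ide1 K P)" "wl K p \<sigma> = ide2 K p" "wl K q \<sigma> = l"
proof -
  have [simp]: "f \<in> arr K" "s1 K f = A" "t1 K f = B" "i \<in> arr K" "s1 K i = A" "t1 K i = P"
    using f i(1) by (simp_all add: hom_def)
  have [simp]: "B \<in> obj K"
    using t1_in_obj[of f] by simp
  have [simp]: "P \<in> obj K" "p \<in> arr K" "s1 K p = P" "t1 K p = A" "q \<in> arr K" "s1 K q = P" "t1 K q = B"
    "l \<in> cell K" "cdom K l = comp1 K f p" "ccod K l = q"
    using comma_square[OF comma] by (simp_all add: hom_def cell2_def)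
  have "comp1 K p (comp1 K i p) = p" "comp1 K q (comp1 K i p) = comp1 K f p"
    using i(2,3) by (simp_all flip: comp1_assoc)
  moreover have "wr K l (comp1 K i p) = ide2 K (comp1 K f p)"
    using i(4) by (simp flip: wr_wr)
  ultimately have "\<exists>!\<sigma>. \<sigma> \<in> cell2 K (comp1 K i p) (ide1 K P) \<and> wl K p \<sigma> = ide2 K p \<and> wl K q \<sigma> = l"
    by (intro comma_lift_2cell[OF comma, of P]) (simp_all add: hom_def cell2_def)
  then show ?thesis
    using that by blast
qed

lemma pullback_section_retraction:
  assumes p: "p \<in> hom K P0 A" and i: "i \<in> hom K A P0" "comp1 K p i = ide1 K A"
    and c1: "c1 \<in> hom K E1 A"
    and Q: "is_pullback K c1 (ide1 K A) Q a1 a2" and P: "is_pullback K c1 p P b1 b2"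
    and h: "h \<in> hom K Q P" "comp1 K b1 h = a1" "comp1 K b2 h = comp1 K i a2"
  obtains r where "r \<in> hom K P Q" "comp1 K a1 r = b1" "comp1 K a2 r = comp1 K p b2" "comp1 K r h = ide1 K Q"
proof -
  have [simp]: "p \<in> arr K" "s1 K p = P0" "t1 K p = A" "i \<in> arr K" "s1 K i = A" "t1 K i = P0"
    "c1 \<in> arr K" "s1 K c1 = E1" "t1 K c1 = A" "h \<in> arr K" "s1 K h = Q" "t1 K h = P"
    using p i(1) c1 h(1) by (simp_all add: hom_def)
  have [simp]: "A \<in> obj K"
    using t1_in_obj[of p] by simp
  have [simp]: "Q \<in> obj K" "a1 \<in> arr K" "s1 K a1 = Q" "t1 K a1 = E1" "a2 \<in> arr K" "s1 K a2 = Q" "t1 K a2 = A"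
    using pullback_square[OF Q] by (simp_all add: hom_def)
  have [simp]: "P \<in> obj K" "b1 \<in> arr K" "s1 K b1 = P" "t1 K b1 = E1" "b2 \<in> arr K" "s1 K b2 = P"
    "t1 K b2 = P0"
    and b12: "comp1 K c1 b1 = comp1 K p b2"
    using pullback_square[OF P] by (simp_all add: hom_def)
  obtain r where r: "r \<in> hom K P Q" "comp1 K a1 r = b1" "comp1 K a2 r = comp1 K p b2"
    using pullback_lift[OF Q, of P b1 "comp1 K p b2"] b12 by (auto simp: hom_def)
  have [simp]: "r \<in> arr K" "s1 K r = P" "t1 K r = Q"
    using r(1) by (simp_all add: hom_def)
  have "comp1 K a2 (comp1 K r h) = comp1 K (comp1 K a2 r) h"
    by simp
  also have "\<dots> = comp1 K p (comp1 K b2 h)"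
    using r(3) by simp
  also have "\<dots> = comp1 K (comp1 K p i) a2"
    using h(3) by simp
  also have "\<dots> = a2"
    using i(2) by simp
  moreover have "comp1 K a1 (comp1 K r h) = a1"
    using r(2) h(2) by (simp flip: comp1_assoc)
  ultimately have "comp1 K r h = ide1 K Q"
    using pullback_hom_ext[OF Q, of "comp1 K r h" Q "ide1 K Q"] by (simp add: hom_def)
  with r that show ?thesis
    by blast
qed

lemma comma_pullback_counit:
  assumes f: "f \<in> hom K A B" and comma: "is_comma K f (ide1 K B) P0 p q l"
    and i: "i \<in> hom K A P0" "comp1 K p i = ide1 K A" "comp1 K q i = f" "wr K l i = ide2 K f"
    and c1: "c1 \<in> hom K E1 A"
    and Q: "is_pullback K c1 (ide1 K A) Q a1 a2" and P: "is_pullback K c1 p P b1 b2"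
    and h: "h \<in> hom K Q P" "comp1 K b1 h = a1" "comp1 K b2 h = comp1 K i a2"
  obtains r \<sigma> where "r \<in> hom K P Q" "comp1 K r h = ide1 K Q" "\<sigma> \<in> cell2 K (comp1 K h r) (ide1 K P)"
    "wl K b1 \<sigma> = ide2 K b1" "wl K (comp1 K q b2) \<sigma> = wr K l b2"
proof -
  have [simp]: "f \<in> arr K" "s1 K f = A" "t1 K f = B" "i \<in> arr K" "s1 K i = A" "t1 K i = P0"
    "h \<in> arr K" "s1 K h = Q" "t1 K h = P"
    using f i(1) h(1) by (simp_all add: hom_def)
  have [simp]: "A \<in> obj K"
    using s1_in_obj[of f] by simp
  have [simp]: "p \<in> arr K" "s1 K p = P0" "t1 K p = A" "q \<in> arr K" "s1 K q = P0" "t1 K q = B"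
    "l \<in> cell K" "cdom K l = comp1 K f p" "ccod K l = q"
    using comma_square[OF comma] t1_in_obj[of f] by (simp_all add: hom_def cell2_def)
  have [simp]: "P \<in> obj K" "b1 \<in> arr K" "s1 K b1 = P" "t1 K b1 = E1" "b2 \<in> arr K" "s1 K b2 = P"
    "t1 K b2 = P0"
    and b12: "comp1 K c1 b1 = comp1 K p b2"
    using pullback_square[OF P] c1 by (simp_all add: hom_def)
  obtain r where r: "r \<in> hom K P Q" "comp1 K a1 r = b1" "comp1 K a2 r = comp1 K p b2"
      "comp1 K r h = ide1 K Q"
    using pullback_section_retraction[OF _ i(1,2) c1 Q P h] by (auto simp: hom_def)
  have [simp]: "r \<in> arr K" "s1 K r = P" "t1 K r = Q" "a2 \<in> arr K" "s1 K a2 = Q" "t1 K a2 = A"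
    using r(1) pullback_square[OF Q] by (simp_all add: hom_def)
  obtain \<sigma>0 where \<sigma>0: "\<sigma>0 \<in> cell2 K (comp1 K i p) (ide1 K P0)" "wl K p \<sigma>0 = ide2 K p" "wl K q \<sigma>0 = l"
    using comma_counit[OF comma f i] .
  have [simp]: "\<sigma>0 \<in> cell K" "cdom K \<sigma>0 = comp1 K i p" "ccod K \<sigma>0 = ide1 K P0"
    using \<sigma>0(1) by (simp_all add: cell2_def)
  have "comp1 K b2 (comp1 K h r) = comp1 K (comp1 K b2 h) r"
    by simp
  also have "\<dots> = comp1 K i (comp1 K a2 r)"
    using h(3) by simp
  finally have "comp1 K b2 (comp1 K h r) = comp1 K i (comp1 K p b2)"
    using r(3) by simp
  moreover have "comp1 K b1 (comp1 K h r) = b1" "wl K c1 (ide2 K b1) = wl K p (wr K \<sigma>0 b2)"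
    using r(2) h(2) b12 \<sigma>0(2) c1 by (simp_all add: hom_def flip: comp1_assoc)
  ultimately have "\<exists>!\<sigma>. \<sigma> \<in> cell2 K (comp1 K h r) (ide1 K P) \<and> wl K b1 \<sigma> = ide2 K b1 \<and> wl K b2 \<sigma> = wr K \<sigma>0 b2"
    by (intro pullback_lift_2cell[OF P, of P]) (simp_all add: hom_def cell2_def)
  then obtain \<sigma> where \<sigma>: "\<sigma> \<in> cell2 K (comp1 K h r) (ide1 K P)" "wl K b1 \<sigma> = ide2 K b1"
      "wl K b2 \<sigma> = wr K \<sigma>0 b2"
    by blast
  have "wl K (comp1 K q b2) \<sigma> = wl K q (wr K \<sigma>0 b2)"
    using \<sigma> by (simp add: cell2_def flip: wl_wl)
  also have "\<dots> = wr K l b2"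
    using \<sigma>0(3) by simp
  finally show ?thesis
    using that r(1,4) \<sigma>(1,2) by blast
qed

lemma yoneda_comma:
  assumes f: "f \<in> hom K A B" and comma: "is_comma K f (ide1 K B) P0 p q l"
    and i: "i \<in> hom K A P0" "comp1 K p i = ide1 K A" "comp1 K q i = f" "wr K l i = ide2 K f"
    and c1: "c1 \<in> hom K E1 A" and d1: "d1 \<in> hom K E1 X"
    and Q: "is_pullback K c1 (ide1 K A) Q a1 a2" and P: "is_pullback K c1 p P b1 b2"
    and h: "h \<in> hom K Q P" "comp1 K b1 h = a1" "comp1 K b2 h = comp1 K i a2"
    and df: "discrete_fibration K X B (d2, E2, c2)"
    and \<phi>: "\<phi> \<in> hom K Q E2" "comp1 K d2 \<phi> = comp1 K d1 a1" "comp1 K c2 \<phi> = comp1 K f a2"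
  shows "\<exists>!\<psi>. \<psi> \<in> hom K P E2 \<and> comp1 K d2 \<psi> = comp1 K d1 b1 \<and> comp1 K c2 \<psi> = comp1 K q b2 \<and>
    comp1 K \<psi> h = \<phi>"
proof -
  obtain r \<sigma> where r: "r \<in> hom K P Q" "comp1 K r h = ide1 K Q"
      and \<sigma>: "\<sigma> \<in> cell2 K (comp1 K h r) (ide1 K P)" "wl K b1 \<sigma> = ide2 K b1"
        "wl K (comp1 K q b2) \<sigma> = wr K l b2"
    using comma_pullback_counit[OF f comma i c1 Q P h] .
  have [simp]: "f \<in> arr K" "s1 K f = A" "t1 K f = B" "i \<in> arr K" "s1 K i = A" "t1 K i = P0"
    "d1 \<in> arr K" "s1 K d1 = E1" "t1 K d1 = X" "h \<in> arr K" "s1 K h = Q" "t1 K h = P"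
    "r \<in> arr K" "s1 K r = P" "t1 K r = Q" "\<sigma> \<in> cell K" "cdom K \<sigma> = comp1 K h r" "ccod K \<sigma> = ide1 K P"
    using f i(1) d1 h(1) r(1) \<sigma>(1) by (simp_all add: hom_def cell2_def)
  have [simp]: "p \<in> arr K" "s1 K p = P0" "t1 K p = A" "q \<in> arr K" "s1 K q = P0" "t1 K q = B"
    "l \<in> cell K" "cdom K l = comp1 K f p"
    using comma_square[OF comma] s1_in_obj[of f] t1_in_obj[of f] by (simp_all add: hom_def cell2_def)
  have [simp]: "A \<in> obj K"
    using s1_in_obj[of f] by simp
  have [simp]: "a2 \<in> arr K" "s1 K a2 = Q" "t1 K a2 = A"
    using pullback_square[OF Q] by (simp_all add: hom_def)
  have [simp]: "b1 \<in> arr K" "s1 K b1 = P" "t1 K b1 = E1" "b2 \<in> arr K" "s1 K b2 = P" "t1 K b2 = P0"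
    using pullback_square[OF P] c1 by (simp_all add: hom_def)
  have "comp1 K (comp1 K q b2) h = comp1 K q (comp1 K i a2)"
    using h(3) by simp
  also have "\<dots> = comp1 K (comp1 K q i) a2"
    by simp
  finally have qb2h: "comp1 K (comp1 K q b2) h = comp1 K f a2"
    using i(3) by simp
  have D\<sigma>: "wl K (comp1 K d1 b1) \<sigma> = ide2 K (comp1 K d1 b1)"
    using \<sigma>(2) by (simp flip: wl_wl)
  have "wr K (wl K (comp1 K q b2) \<sigma>) h = wr K l (comp1 K i a2)"
    using \<sigma>(3) h(3) by simp
  also have "\<dots> = wr K (wr K l i) a2"
    by simp
  finally have C\<sigma>h: "wr K (wl K (comp1 K q b2) \<sigma>) h = ide2 K (comp1 K (comp1 K q b2) h)"
    using i(4) qb2h by simp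
  have "comp1 K d2 \<phi> = comp1 K (comp1 K d1 b1) h" "comp1 K c2 \<phi> = comp1 K (comp1 K q b2) h"
    using \<phi>(2,3) h(2) qb2h by simp_all
  moreover have "comp1 K d1 b1 \<in> hom K P X" "comp1 K q b2 \<in> hom K P B"
    by (simp_all add: hom_def)
  ultimately show ?thesis
    using dfib_extension_unique[OF df h(1) r _ _ \<sigma>(1) D\<sigma> C\<sigma>h \<phi>(1)] by blast
qed

lemma i_f_spec:
  assumes fc: "finitely_complete K" and f: "f \<in> arr K" and cm: "cm K f (ide1 K (t1 K f)) = (P, p, q, l)"
  shows "i_f K f \<in> hom K (s1 K f) P \<and> comp1 K p (i_f K f) = ide1 K (s1 K f) \<and> comp1 K q (i_f K f) = f \<and>
    wr K l (i_f K f) = ide2 K f"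
proof -
  have comma: "is_comma K f (ide1 K (t1 K f)) P p q l"
    using cm_is_comma[OF fc f _ _ cm] f by simp
  have "\<exists>!z. z \<in> hom K (s1 K f) P \<and> comp1 K p z = ide1 K (s1 K f) \<and> comp1 K q z = f \<and> wr K l z = ide2 K f"
    using f by (intro comma_lift[OF comma]) (simp_all add: hom_def cell2_def)
  then show ?thesis
    unfolding i_f_def cm prod.case by (rule theI')
qed

lemma j_f_spec:
  assumes fc: "finitely_complete K" and f: "f \<in> arr K" and cm: "cm K (ide1 K (t1 K f)) f = (P, p, q, l)"
  shows "j_f K f \<in> hom K (s1 K f) P \<and> comp1 K p (j_f K f) = f \<and> comp1 K q (j_f K f) = ide1 K (s1 K f) \<and>
    wr K l (j_f K f) = ide2 K f"
proof -
  have comma: "is_comma K (ide1 K (t1 K f)) f P p q l"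
    using cm_is_comma[OF fc _ f _ cm] f by simp
  have "\<exists>!z. z \<in> hom K (s1 K f) P \<and> comp1 K p z = f \<and> comp1 K q z = ide1 K (s1 K f) \<and> wr K l z = ide2 K f"
    using f by (intro comma_lift[OF comma]) (simp_all add: hom_def cell2_def)
  then show ?thesis
    unfolding j_f_def cm prod.case by (rule theI')
qed

lemma span_hmap_spec:
  assumes fc: "finitely_complete K"
    and S1: "is_span K A B S1" and S2: "is_span K B C S2" and T1: "is_span K A B T1" and T2: "is_span K B C T2"
    and m1: "span_map K S1 T1 m1" and m2: "span_map K S2 T2 m2"
    and pbS: "pb K (sc S1) (sd S2) = (P, p1, p2)" and pbT: "pb K (sc T1) (sd T2) = (Q, q1, q2)"
  shows "span_hmap K S1 S2 T1 T2 m1 m2 \<in> hom K P Q \<and>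
    comp1 K q1 (span_hmap K S1 S2 T1 T2 m1 m2) = comp1 K m1 p1 \<and>
    comp1 K q2 (span_hmap K S1 S2 T1 T2 m1 m2) = comp1 K m2 p2"
proof -
  have [simp]: "sc S1 \<in> arr K" "s1 K (sc S1) = sE S1" "t1 K (sc S1) = B" "sd S2 \<in> arr K" "s1 K (sd S2) = sE S2"
    "t1 K (sd S2) = B" "sc T1 \<in> arr K" "s1 K (sc T1) = sE T1" "t1 K (sc T1) = B" "sd T2 \<in> arr K"
    "s1 K (sd T2) = sE T2" "t1 K (sd T2) = B"
    using S1 S2 T1 T2 by (simp_all add: is_span_def hom_def)
  have [simp]: "m1 \<in> arr K" "s1 K m1 = sE S1" "t1 K m1 = sE T1" "m2 \<in> arr K" "s1 K m2 = sE S2" "t1 K m2 = sE T2"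
    using m1 m2 by (simp_all add: span_map_def hom_def)
  have PS: "is_pullback K (sc S1) (sd S2) P p1 p2" and PT: "is_pullback K (sc T1) (sd T2) Q q1 q2"
    using pb_is_pullback[OF fc _ _ _ pbS] pb_is_pullback[OF fc _ _ _ pbT] by simp_all
  have [simp]: "P \<in> obj K" "p1 \<in> arr K" "s1 K p1 = P" "t1 K p1 = sE S1" "p2 \<in> arr K" "s1 K p2 = P"
    "t1 K p2 = sE S2"
    using pullback_square[OF PS] by (simp_all add: hom_def)
  have "comp1 K (sc T1) (comp1 K m1 p1) = comp1 K (comp1 K (sc T1) m1) p1"
    by simp
  also have "\<dots> = comp1 K (comp1 K (sd T2) m2) p2"
    using m1 m2 pullback_square[OF PS] by (simp add: span_map_def)
  finally have "comp1 K (sc T1) (comp1 K m1 p1) = comp1 K (sd T2) (comp1 K m2 p2)"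
    by simp
  moreover have "comp1 K m1 p1 \<in> hom K P (s1 K (sc T1))" "comp1 K m2 p2 \<in> hom K P (s1 K (sd T2))"
    by (simp_all add: hom_def)
  ultimately have "\<exists>!z. z \<in> hom K P Q \<and> comp1 K q1 z = comp1 K m1 p1 \<and> comp1 K q2 z = comp1 K m2 p2"
    using pullback_lift[OF PT] by simp
  then show ?thesis
    unfolding span_hmap_def pbS pbT prod.case by (rule theI')
qed

lemma span_hmap_i_f:
  assumes fc: "finitely_complete K" and f: "f \<in> arr K" and S1: "is_span K X (s1 K f) S1"
    and cm: "cm K f (ide1 K (t1 K f)) = (P0, p, q, l)"
    and pbQ: "pb K (sc S1) (ide1 K (s1 K f)) = (Q, a1, a2)" and pbP: "pb K (sc S1) p = (P, b1, b2)"
  defines "h \<equiv> span_hmap K S1 (span_of K f) S1 (fslash K f) (ide1 K (sE S1)) (i_f K f)"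
  shows "h \<in> hom K Q P \<and> comp1 K b1 h = a1 \<and> comp1 K b2 h = comp1 K (i_f K f) a2"
proof -
  have fslash: "fslash K f = (p, P0, q)"
    by (simp add: fslash_def cm)
  have comma: "is_comma K f (ide1 K (t1 K f)) P0 p q l"
    using cm_is_comma[OF fc f _ _ cm] f by simp
  have "h \<in> hom K Q P \<and> comp1 K b1 h = comp1 K (ide1 K (sE S1)) a1 \<and> comp1 K b2 h = comp1 K (i_f K f) a2"
    unfolding h_def
  proof (rule span_hmap_spec[OF fc S1 _ S1])
    show "is_span K (s1 K f) (t1 K f) (span_of K f)" "is_span K (s1 K f) (t1 K f) (fslash K f)"
      using f comma_square[OF comma] by (simp_all add: is_span_def span_of_def fslash hom_def)
    show "span_map K S1 S1 (ide1 K (sE S1))" "span_map K (span_of K f) (fslash K f) (i_f K f)"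
      using S1 i_f_spec[OF fc f cm] by (simp_all add: is_span_def span_map_def span_of_def fslash hom_def)
    show "pb K (sc S1) (sd (span_of K f)) = (Q, a1, a2)" "pb K (sc S1) (sd (fslash K f)) = (P, b1, b2)"
      using pbQ pbP by (simp_all add: span_of_def fslash)
  qed
  then show ?thesis
    using pb_is_pullback[OF fc _ _ _ pbQ] S1 f pullback_square by (fastforce simp: is_span_def hom_def)
qed

lemma span_hmap_j_f:
  assumes fc: "finitely_complete K" and f: "f \<in> arr K" and S1: "is_span K (s1 K f) X S1"
    and cm: "cm K (ide1 K (t1 K f)) f = (P0, p, q, l)"
    and pbQ: "pb K (ide1 K (s1 K f)) (sd S1) = (Q, a1, a2)" and pbP: "pb K q (sd S1) = (P, b1, b2)"
  defines "h \<equiv> span_hmap K (span_rev K f) S1 (slashf K f) S1 (j_f K f) (ide1 K (sE S1))"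
  shows "h \<in> hom K Q P \<and> comp1 K b1 h = comp1 K (j_f K f) a1 \<and> comp1 K b2 h = a2"
proof -
  have slashf: "slashf K f = (p, P0, q)"
    by (simp add: slashf_def cm)
  have comma: "is_comma K (ide1 K (t1 K f)) f P0 p q l"
    using cm_is_comma[OF fc _ f _ cm] f by simp
  have "h \<in> hom K Q P \<and> comp1 K b1 h = comp1 K (j_f K f) a1 \<and> comp1 K b2 h = comp1 K (ide1 K (sE S1)) a2"
    unfolding h_def
  proof (rule span_hmap_spec[OF fc _ S1 _ S1])
    show "is_span K (t1 K f) (s1 K f) (span_rev K f)" "is_span K (t1 K f) (s1 K f) (slashf K f)"
      using f comma_square[OF comma] by (simp_all add: is_span_def span_rev_def slashf hom_def)
    show "span_map K (span_rev K f) (slashf K f) (j_f K f)" "span_map K S1 S1 (ide1 K (sE S1))"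
      using S1 j_f_spec[OF fc f cm] by (simp_all add: is_span_def span_map_def span_rev_def slashf hom_def)
    show "pb K (sc (span_rev K f)) (sd S1) = (Q, a1, a2)" "pb K (sc (slashf K f)) (sd S1) = (P, b1, b2)"
      using pbQ pbP by (simp_all add: span_rev_def slashf)
  qed
  then show ?thesis
    using pb_is_pullback[OF fc _ _ _ pbQ] S1 f pullback_square by (fastforce simp: is_span_def hom_def)
qed

lemma yoneda_span:
  assumes fc: "finitely_complete K" and f: "f \<in> arr K"
    and S1: "is_span K X (s1 K f) S1" and S2: "discrete_fibration K X (t1 K f) S2"
    and \<phi>: "span_map K (span_comp K S1 (span_of K f)) S2 \<phi>"
  shows "\<exists>!\<psi>. span_map K (span_comp K S1 (fslash K f)) S2 \<psi> \<and>
    comp1 K \<psi> (span_hmap K S1 (span_of K f) S1 (fslash K f) (ide1 K (sE S1)) (i_f K f)) = \<phi>"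
proof -
  obtain d1 E1 c1 where S1_eq: "S1 = (d1, E1, c1)"
    by (cases S1)
  obtain d2 E2 c2 where S2_eq: "S2 = (d2, E2, c2)"
    by (cases S2)
  obtain P0 p q l where cm: "cm K f (ide1 K (t1 K f)) = (P0, p, q, l)"
    by (cases "cm K f (ide1 K (t1 K f))")
  obtain Q a1 a2 where pbQ: "pb K c1 (ide1 K (s1 K f)) = (Q, a1, a2)"
    by (cases "pb K c1 (ide1 K (s1 K f))")
  obtain P b1 b2 where pbP: "pb K c1 p = (P, b1, b2)"
    by (cases "pb K c1 p")
  have [simp]: "sd S1 = d1" "sE S1 = E1" "sc S1 = c1" "sd S2 = d2" "sE S2 = E2" "sc S2 = c2"
    by (simp_all add: S1_eq S2_eq)
  have fslash: "fslash K f = (p, P0, q)"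
    by (simp add: fslash_def cm)
  have comma: "is_comma K f (ide1 K (t1 K f)) P0 p q l"
    using cm_is_comma[OF fc f _ _ cm] f by simp
  have i: "i_f K f \<in> hom K (s1 K f) P0" "comp1 K p (i_f K f) = ide1 K (s1 K f)" "comp1 K q (i_f K f) = f"
      "wr K l (i_f K f) = ide2 K f"
    using i_f_spec[OF fc f cm] by blast+
  have [simp]: "E1 \<in> obj K" "d1 \<in> arr K" "s1 K d1 = E1" "t1 K d1 = X" "c1 \<in> arr K" "s1 K c1 = E1"
      "t1 K c1 = s1 K f"
    using S1 by (simp_all add: is_span_def hom_def)
  have [simp]: "p \<in> arr K" "s1 K p = P0" "t1 K p = s1 K f"
    using comma_square[OF comma] by (simp_all add: hom_def)
  have Q: "is_pullback K c1 (ide1 K (s1 K f)) Q a1 a2" and P: "is_pullback K c1 p P b1 b2"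
    using pb_is_pullback[OF fc _ _ _ pbQ] pb_is_pullback[OF fc _ _ _ pbP] f by simp_all
  define h where "h = span_hmap K S1 (span_of K f) S1 (fslash K f) (ide1 K (sE S1)) (i_f K f)"
  have h: "h \<in> hom K Q P" "comp1 K b1 h = a1" "comp1 K b2 h = comp1 K (i_f K f) a2"
    using span_hmap_i_f[OF fc f S1 cm] pbQ pbP unfolding h_def by simp_all
  have comp: "span_comp K S1 (span_of K f) = (comp1 K d1 a1, Q, comp1 K f a2)"
      "span_comp K S1 (fslash K f) = (comp1 K d1 b1, P, comp1 K q b2)"
    using f by (simp_all add: span_comp_def span_of_def fslash pbQ pbP)
  have "\<phi> \<in> hom K Q E2" "comp1 K d2 \<phi> = comp1 K d1 a1" "comp1 K c2 \<phi> = comp1 K f a2"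
    using \<phi> by (simp_all add: span_map_def comp)
  from yoneda_comma[OF _ comma i _ _ Q P h S2[unfolded S2_eq] this] f
  show ?thesis
    unfolding h_def[symmetric] span_map_def comp by (simp add: hom_def)
qed

lemma coyoneda_span:
  assumes fc: "finitely_complete K" and f: "f \<in> arr K"
    and S1: "is_span K (s1 K f) X S1" and S2: "discrete_fibration K (t1 K f) X S2"
    and \<phi>: "span_map K (span_comp K (span_rev K f) S1) S2 \<phi>"
  shows "\<exists>!\<psi>. span_map K (span_comp K (slashf K f) S1) S2 \<psi> \<and>
    comp1 K \<psi> (span_hmap K (span_rev K f) S1 (slashf K f) S1 (j_f K f) (ide1 K (sE S1))) = \<phi>"
proof -
  interpret co: strict_two_category "co K"
    using two_category_co by unfold_locales
  obtain d1 E1 c1 where S1_eq: "S1 = (d1, E1, c1)"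
    by (cases S1)
  obtain d2 E2 c2 where S2_eq: "S2 = (d2, E2, c2)"
    by (cases S2)
  obtain P0 p q l where cm: "cm K (ide1 K (t1 K f)) f = (P0, p, q, l)"
    by (cases "cm K (ide1 K (t1 K f)) f")
  obtain Q a1 a2 where pbQ: "pb K (ide1 K (s1 K f)) d1 = (Q, a1, a2)"
    by (cases "pb K (ide1 K (s1 K f)) d1")
  obtain P b1 b2 where pbP: "pb K q d1 = (P, b1, b2)"
    by (cases "pb K q d1")
  have [simp]: "sd S1 = d1" "sE S1 = E1" "sc S1 = c1" "sd S2 = d2" "sE S2 = E2" "sc S2 = c2"
    by (simp_all add: S1_eq S2_eq)
  have slashf: "slashf K f = (p, P0, q)"
    by (simp add: slashf_def cm)
  have comma: "is_comma K (ide1 K (t1 K f)) f P0 p q l"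
    using cm_is_comma[OF fc _ f _ cm] f by simp
  have j: "j_f K f \<in> hom K (s1 K f) P0" "comp1 K p (j_f K f) = f" "comp1 K q (j_f K f) = ide1 K (s1 K f)"
      "wr K l (j_f K f) = ide2 K f"
    using j_f_spec[OF fc f cm] by blast+
  have [simp]: "E1 \<in> obj K" "d1 \<in> arr K" "s1 K d1 = E1" "t1 K d1 = s1 K f" "c1 \<in> arr K" "s1 K c1 = E1"
      "t1 K c1 = X"
    using S1 by (simp_all add: is_span_def hom_def)
  have [simp]: "q \<in> arr K" "s1 K q = P0" "t1 K q = s1 K f"
    using comma_square[OF comma] by (simp_all add: hom_def)
  have Q: "is_pullback K (ide1 K (s1 K f)) d1 Q a1 a2" and P: "is_pullback K q d1 P b1 b2"
    using pb_is_pullback[OF fc _ _ _ pbQ] pb_is_pullback[OF fc _ _ _ pbP] f by simp_all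
  define h where "h = span_hmap K (span_rev K f) S1 (slashf K f) S1 (j_f K f) (ide1 K (sE S1))"
  have h: "h \<in> hom K Q P" "comp1 K b2 h = a2" "comp1 K b1 h = comp1 K (j_f K f) a1"
    using span_hmap_j_f[OF fc f S1 cm] pbQ pbP unfolding h_def by simp_all
  have comp: "span_comp K (span_rev K f) S1 = (comp1 K f a1, Q, comp1 K c1 a2)"
      "span_comp K (slashf K f) S1 = (comp1 K p b1, P, comp1 K c1 b2)"
    using f by (simp_all add: span_comp_def span_rev_def slashf pbQ pbP)
  have "\<phi> \<in> hom K Q E2" "comp1 K c2 \<phi> = comp1 K c1 a2" "comp1 K d2 \<phi> = comp1 K f a1"
    using \<phi> by (simp_all add: span_map_def comp)
  moreover have "f \<in> hom K (s1 K f) (t1 K f)" "d1 \<in> hom K E1 (s1 K f)" "c1 \<in> hom K E1 X"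
    using f by (simp_all add: hom_def)
  ultimately have "\<exists>!\<psi>. \<psi> \<in> hom K P E2 \<and> comp1 K c2 \<psi> = comp1 K c1 b2 \<and> comp1 K d2 \<psi> = comp1 K p b1 \<and>
      comp1 K \<psi> h = \<phi>"
    using co.yoneda_comma[unfolded co_simps hom_co wr_co, OF _ is_comma_co[OF comma] j(1,3,2,4) _ _
        is_pullback_co[OF is_pullback_sym[OF Q]] is_pullback_co[OF is_pullback_sym[OF P]] h(1,2,3)
        discrete_fibration_co[OF S2[unfolded S2_eq]]]
    by blast
  then show ?thesis
    unfolding h_def[symmetric] span_map_def comp by (simp add: conj_ac)
qed

end

theorem theorem2p7:
  fixes K :: "('o, 'm, 'c) two_cat" and f :: 'm
  assumes "finitely_complete K" and "f \<in> arr K"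
  shows
   "(\<forall>X\<in>obj K. \<forall>S1 S2. is_span K X (s1 K f) S1 \<and> discrete_fibration K X (t1 K f) S2 \<longrightarrow>
       (\<forall>\<phi>. span_map K (span_comp K S1 (span_of K f)) S2 \<phi> \<longrightarrow>
          (\<exists>!\<psi>. span_map K (span_comp K S1 (fslash K f)) S2 \<psi> \<and>
             comp1 K \<psi> (span_hmap K S1 (span_of K f) S1 (fslash K f) (ide1 K (sE S1)) (i_f K f)) = \<phi>)))
    \<and>
    (\<forall>X\<in>obj K. \<forall>S1 S2. is_span K (s1 K f) X S1 \<and> discrete_fibration K (t1 K f) X S2 \<longrightarrow>
       (\<forall>\<phi>. span_map K (span_comp K (span_rev K f) S1) S2 \<phi> \<longrightarrow>
          (\<exists>!\<psi>. span_map K (span_comp K (slashf K f) S1) S2 \<psi> \<and>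
             comp1 K \<psi> (span_hmap K (span_rev K f) S1 (slashf K f) S1 (j_f K f) (ide1 K (sE S1))) = \<phi>)))"
proof -
  interpret strict_two_category K
    using assms(1) unfolding finitely_complete_def by unfold_locales blast
  show ?thesis
    using yoneda_span[OF assms] coyoneda_span[OF assms] by blast
qed

end
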